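(* Let $\mathcal X,\mathcal Y$ be Polish spaces, $c:\mathcal X\times\mathcal Y\to\mathbb R$ measurable with $|c|\le 1$, and $\varepsilon>0$. Then for all $\mu,\tilde\mu\in\mathcal P(\mathcal X)$ and $\nu,\tilde\nu\in\mathcal P(\mathcal Y)$, \[ |\mathrm{OT}_{c,\varepsilon}(\tilde\mu,\tilde\nu)-\mathrm{OT}_{c,\varepsilon}(\mu,\nu)|\le 2\sup_{\phi\in\mathcal F_{c,\varepsilon}}\Big|\int_{\mathcal X}\phi\,d(\tilde\mu-\mu)\Big|+2\sup_{\phi\in\mathcal F_{c,\varepsilon}}\Big|\int_{\mathcal Y}\phi^{(c,\varepsilon)}_{\tilde\mu}\,d(\tilde\nu-\nu)\Big|. \]
   Context: $\mathcal P(\cdot)$ denotes Borel probability measures. $\mathrm{OT}_{c,\varepsilon}(\mu,\nu)=\inf_{\pi\in\Pi(\mu,\nu)}\int c\,d\pi+\varepsilon\,\mathrm{KL}(\pi\mid\mu\otimes\nu)$, with $\Pi(\mu,\nu)$ the couplings of $\mu,\nu$ and $\mathrm{KL}(\pi\mid\rho)=\int\log(d\pi/d\rho)\,d\pi$ if $\pi\ll\rho$, $+\infty$ otherwise. $\exp_\varepsilon(t)=\exp(t/\varepsilon)$. For $\xi\in\mathcal P(\mathcal Y)$ and measurable $\psi$ on $\mathcal Y$: $\psi^{(c,\varepsilon)}_\xi(x)=-\varepsilon\log\int\exp_\varepsilon(\psi(y)-c(x,y))\,d\xi(y)$; for $\tilde\mu\in\mathcal P(\mathcal X)$ and measurable $\phi$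 on $\mathcal X$: $\phi^{(c,\varepsilon)}_{\tilde\mu}(y)=-\varepsilon\log\int\exp_\varepsilon(\phi(x)-c(x,y))\,d\tilde\mu(x)$. $\mathcal F_{c,\varepsilon}=\bigcup_{\xi\in\mathcal P(\mathcal Y)}\{\phi:\mathcal X\to\mathbb R\mid\exists\,\psi:\mathcal Y\to\mathbb R\text{ measurable},\ \phi=\psi^{(c,\varepsilon)}_\xi,\ \|\phi\|_\infty,\|\psi\|_\infty\le 3/2\}$. *)

theory Defs
  imports "HOL-Probability.Probability"
begin

definition borel_prob :: "'a::topological_space measure \<Rightarrow> bool" where
  "borel_prob M \<longleftrightarrow> prob_space M \<and> sets M = sets (borel :: 'a measure)"

definition couplings :: "'a::topological_space measure \<Rightarrow> 'b::topological_space measure \<Rightarrow> ('a \<times> 'b) measure set" where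
  "couplings \<mu> \<nu> = {\<pi>. prob_space \<pi> \<and> sets \<pi> = sets (\<mu> \<Otimes>\<^sub>M \<nu>)
      \<and> distr \<pi> \<mu> fst = \<mu> \<and> distr \<pi> \<nu> snd = \<nu>}"

text \<open>Kullback-Leibler divergence KL(pi | rho) = int log (d pi / d rho) d pi if pi << rho,
  +infinity otherwise.  (The negative part of the log-density is always pi-integrable,
  so a non-integrable log-density means the integral is +infinity.)\<close>
definition KL :: "'a measure \<Rightarrow> 'a measure \<Rightarrow> ereal" where
  "KL \<pi> \<rho> =
     (if sets \<pi> = sets \<rho> \<and> absolutely_continuous \<rho> \<pi> then
        (if integrable \<pi> (\<lambda>z. ln (enn2real (RN_deriv \<rho> \<pi> z)))
         then ereal (\<integral>z. ln (enn2real (RN_deriv \<rho> \<pi> z)) \<partial>\<pi>)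
         else \<infinity>)
      else \<infinity>)"

definition OT :: "('a::topological_space \<Rightarrow> 'b::topological_space \<Rightarrow> real) \<Rightarrow> real
     \<Rightarrow> 'a measure \<Rightarrow> 'b measure \<Rightarrow> ereal" where
  "OT c \<epsilon> \<mu> \<nu> =
     (INF \<pi>\<in>couplings \<mu> \<nu>. ereal (\<integral>z. c (fst z) (snd z) \<partial>\<pi>) + ereal \<epsilon> * KL \<pi> (\<mu> \<Otimes>\<^sub>M \<nu>))"

definition ctransX :: "('a \<Rightarrow> 'b \<Rightarrow> real) \<Rightarrow> real \<Rightarrow> 'b measure \<Rightarrow> ('b \<Rightarrow> real) \<Rightarrow> 'a \<Rightarrow> real" where
  "ctransX c \<epsilon> \<xi> \<psi> x = - \<epsilon> * ln (\<integral>y. exp ((\<psi> y - c x y) / \<epsilon>) \<partial>\<xi>)"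

definition ctransY :: "('a \<Rightarrow> 'b \<Rightarrow> real) \<Rightarrow> real \<Rightarrow> 'a measure \<Rightarrow> ('a \<Rightarrow> real) \<Rightarrow> 'b \<Rightarrow> real" where
  "ctransY c \<epsilon> \<mu> \<phi> y = - \<epsilon> * ln (\<integral>x. exp ((\<phi> x - c x y) / \<epsilon>) \<partial>\<mu>)"

definition Fce :: "('a::topological_space \<Rightarrow> 'b::topological_space \<Rightarrow> real) \<Rightarrow> real \<Rightarrow> ('a \<Rightarrow> real) set" where
  "Fce c \<epsilon> = {\<phi>. \<exists>\<xi> :: 'b measure. \<exists>\<psi>. borel_prob \<xi> \<and> \<psi> \<in> borel_measurable borel
       \<and> \<phi> = ctransX c \<epsilon> \<xi> \<psi>
       \<and> (\<forall>x. \<bar>\<phi> x\<bar> \<le> 3/2) \<and> (\<forall>y. \<bar>\<psi> y\<bar> \<le> 3/2)}"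

end

(* The Gibbs kernel exp (-c/eps) of a cost bounded by 1 is bounded above and below, so the Sinkhorn
   map psi |-> (psi^(c,eps)_nu)^(c,eps)_mu contracts the oscillation of differences (a Birkhoff-Hopf
   type estimate).  After normalisation at a point its iterates converge uniformly to a fixed point,
   and a constant shift turns it into Schroedinger potentials phi = psi^(c,eps)_nu, psi = phi^(c,eps)_mu
   with |phi|, |psi| <= 3/2.  Gibbs' variational inequality gives OT(mu, nu) >= int phi dmu + int psi dnu
   for every bounded pair satisfying one of these two equations, and the Gibbs coupling
   exp ((phi + psi - c)/eps) d(mu x nu) attains the bound for the potentials.  Changing one marginal
   at a time and testing each problem with the optimal potentials of the other bounds each difference
   by a single integral of a function from F_(c,eps). *)

theory Submission
  imports Defs
begin

lemma ln_convex_comb_le_mult_ln: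
  fixes \<theta> r R :: real
  assumes th: "0 < \<theta>" "\<theta> < 1" and r: "1 \<le> r" "r \<le> R"
  shows "ln (\<theta> + (1-\<theta>)*r) \<le> ((1-\<theta>)*R/(\<theta>+(1-\<theta>)*R)) * ln r"
proof -
  define k where "k = (1-\<theta>)*R/(\<theta>+(1-\<theta>)*R)"
  define f where "f t = k * ln t - ln (\<theta> + (1-\<theta>)*t)" for t
  have pos: "\<theta> + (1-\<theta>)*t > 0" if "t \<ge> 1" for t
    using th that by (smt (verit, best) mult_le_cancel_left1)
  have der: "DERIV f t :> k / t - (1-\<theta>)/(\<theta> + (1-\<theta>)*t)" if "t \<ge> 1" for t
    unfolding f_def using pos[OF that] that
    by (auto intro!: derivative_eq_intros simp: field_simps)
  have "f 1 \<le> f r"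
  proof (rule DERIV_nonneg_imp_increasing_open[OF r(1)])
    fix t assume t: "1 < t" "t < r"
    have "(1-\<theta>) * t * (\<theta>+(1-\<theta>)*R) \<le> (1-\<theta>)*R * (\<theta> + (1-\<theta>)*t)"
    proof -
      have "0 \<le> \<theta>*(1-\<theta>)*(R-t)" using t r th by simp
      then show ?thesis by (simp add: algebra_simps)
    qed
    then have "(1-\<theta>)/(\<theta> + (1-\<theta>)*t) \<le> k / t"
      unfolding k_def using pos[of t] pos[of R] t r
      by (simp add: divide_simps mult.commute mult.left_commute)
    then show "\<exists>y. DERIV f t :> y \<and> 0 \<le> y" using der[of t] t by auto
  next
    show "continuous_on {1..r} f"
      by (rule DERIV_continuous_on) (use der in \<open>auto intro: has_field_derivative_at_within\<close>)
  qed
  then show ?thesis unfolding f_def k_def by simp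
qed

lemma ln_ratio_convex_comb_le:
  fixes \<theta> a b A R :: real
  assumes th: "0 < \<theta>" "\<theta> < 1" and a: "0 < a" "a \<le> A" "a \<le> b" "b \<le> R * a"
  shows "ln (\<theta>*A + (1-\<theta>)*b) - ln (\<theta>*A + (1-\<theta>)*a)
           \<le> ((1-\<theta>)*R/(\<theta>+(1-\<theta>)*R)) * (ln b - ln a)"
proof -
  have Y: "\<theta>*A + (1-\<theta>)*a > 0" and X: "\<theta>*A + (1-\<theta>)*b > 0"
    using th a by (smt (verit) mult_pos_pos)+
  have r: "0 < \<theta> + (1-\<theta>)*(b/a)" using th a by (smt (verit) divide_pos_pos mult_pos_pos)
  have "(\<theta>*A + (1-\<theta>)*b) * a \<le> (\<theta> + (1-\<theta>)*(b/a)) * a * (\<theta>*A + (1-\<theta>)*a)"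
  proof -
    have e: "(\<theta> + (1-\<theta>)*(b/a)) * a = \<theta>*a + (1-\<theta>)*b" using a by (simp add: field_simps)
    have "0 \<le> \<theta>*(1-\<theta>)*(A-a)*(b-a)" using th a by simp
    then show ?thesis unfolding e by (simp add: algebra_simps)
  qed
  then have "(\<theta>*A + (1-\<theta>)*b) / (\<theta>*A + (1-\<theta>)*a) \<le> \<theta> + (1-\<theta>)*(b/a)"
    using Y a by (simp add: divide_le_eq mult.commute mult.left_commute)
  then have "ln ((\<theta>*A + (1-\<theta>)*b) / (\<theta>*A + (1-\<theta>)*a)) \<le> ln (\<theta> + (1-\<theta>)*(b/a))"
    using X Y r by (subst ln_le_cancel_iff) auto
  also have "\<dots> \<le> ((1-\<theta>)*R/(\<theta>+(1-\<theta>)*R)) * ln (b/a)"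
    by (rule ln_convex_comb_le_mult_ln[OF th]) (use a in \<open>simp_all add: divide_le_eq\<close>)
  finally show ?thesis using X Y a by (simp add: ln_div)
qed

lemma integral_ratio_convex_comb_bounds:
  fixes u v K :: "'a \<Rightarrow> real"
  assumes int: "integrable N u" "integrable N v"
      "integrable N (\<lambda>y. K y * u y)" "integrable N (\<lambda>y. K y * v y)"
    and v: "\<And>y. 0 \<le> v y" "0 < (\<integral>y. v y \<partial>N)"
    and uv: "\<And>y. a * v y \<le> u y" "\<And>y. u y \<le> b * v y"
    and K: "0 < lo" "\<And>y. lo \<le> K y" "\<And>y. K y \<le> hi"
  defines "\<theta> \<equiv> lo / hi" and "A \<equiv> (\<integral>y. u y \<partial>N) / (\<integral>y. v y \<partial>N)"
  shows "a \<le> A"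
    and "\<theta> * A + (1 - \<theta>) * a \<le> (\<integral>y. K y * u y \<partial>N) / (\<integral>y. K y * v y \<partial>N)"
    and "(\<integral>y. K y * u y \<partial>N) / (\<integral>y. K y * v y \<partial>N) \<le> \<theta> * A + (1 - \<theta>) * b"
proof -
  define P where "P = (\<integral>y. v y \<partial>N)"
  define Q where "Q = (\<integral>y. u y \<partial>N)"
  define Z1 where "Z1 = (\<integral>y. K y * u y \<partial>N)"
  define Z2 where "Z2 = (\<integral>y. K y * v y \<partial>N)"
  have hi: "0 < hi" using K(1) K(2)[of undefined] K(3)[of undefined] by linarith
  have P: "0 < P" using v(2) by (simp add: P_def)
  have "(\<integral>y. lo * v y \<partial>N) \<le> Z2" "Z2 \<le> (\<integral>y. hi * v y \<partial>N)"
    unfolding Z2_def using int K v(1)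
    by (intro integral_mono; simp add: mult_right_mono)+
  then have "lo * P \<le> Z2" "Z2 \<le> hi * P" by (simp_all add: P_def)
  then have Z2: "0 < Z2" "Z2 \<le> hi * P" using P K(1) by (auto intro: less_le_trans[OF mult_pos_pos])
  have "(\<integral>y. a * v y \<partial>N) \<le> Q"
    unfolding Q_def using int uv(1) by (intro integral_mono) simp_all
  then show "a \<le> A" using P by (simp add: A_def P_def Q_def le_divide_eq)
  \<comment> \<open>Split off the multiple k of the product kernel; the remaining weight K - k stays nonnegative.\<close>
  define k where "k = \<theta> * Z2 / P"
  have "Z2 * lo \<le> (hi * P) * lo" using Z2 K(1) by (simp add: mult_right_mono)
  then have "k \<le> lo" using P hi unfolding k_def \<theta>_def by (simp add: field_simps ac_simps)
  then have w: "0 \<le> K y - k" for y using K(2)[of y] by linarith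
  have iw: "integrable N (\<lambda>y. (K y - k) * u y)" "integrable N (\<lambda>y. (K y - k) * v y)"
    using int by (simp_all add: left_diff_distrib)
  have "(\<integral>y. (K y - k) * v y \<partial>N) = Z2 - k * P"
    using int unfolding Z2_def P_def by (simp add: left_diff_distrib)
  then have wv: "(\<integral>y. (K y - k) * v y \<partial>N) = (1 - \<theta>) * Z2"
    using P by (simp add: k_def algebra_simps)
  have "(\<integral>y. (K y - k) * u y \<partial>N) = Z1 - k * Q"
    using int unfolding Z1_def Q_def by (simp add: left_diff_distrib)
  then have wu: "(\<integral>y. (K y - k) * u y \<partial>N) = Z1 - \<theta> * A * Z2"
    by (simp add: k_def A_def P_def Q_def)
  have "a * ((1 - \<theta>) * Z2) \<le> Z1 - \<theta> * A * Z2"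
  proof -
    have "(\<integral>y. a * ((K y - k) * v y) \<partial>N) \<le> (\<integral>y. (K y - k) * u y \<partial>N)"
      using iw mult_left_mono[OF uv(1) w] by (intro integral_mono) (simp_all add: ac_simps)
    then show ?thesis using wv wu by simp
  qed
  then show "\<theta> * A + (1 - \<theta>) * a \<le> Z1 / Z2" using Z2 by (simp add: le_divide_eq algebra_simps)
  have "Z1 - \<theta> * A * Z2 \<le> b * ((1 - \<theta>) * Z2)"
  proof -
    have "(\<integral>y. (K y - k) * u y \<partial>N) \<le> (\<integral>y. b * ((K y - k) * v y) \<partial>N)"
      using iw mult_left_mono[OF uv(2) w] by (intro integral_mono) (simp_all add: ac_simps)
    then show ?thesis using wv wu by simp
  qed
  then have "Z1 \<le> (\<theta> * A + (1 - \<theta>) * b) * Z2" by (simp add: algebra_simps)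
  then show "Z1 / Z2 \<le> \<theta> * A + (1 - \<theta>) * b" using Z2 by (simp add: divide_le_eq)
qed

lemma geometric_increments_limit:
  fixes f :: "nat \<Rightarrow> real"
  assumes \<kappa>: "0 \<le> \<kappa>" "\<kappa> < 1" and inc: "\<And>n. \<bar>f (Suc n) - f n\<bar> \<le> C * \<kappa>^n"
  obtains L where "f \<longlonglongrightarrow> L" "\<And>n. \<bar>f n - L\<bar> \<le> C * \<kappa>^n / (1 - \<kappa>)"
proof -
  define d where "d n = f (Suc n) - f n" for n
  have "summable (\<lambda>n. C * \<kappa>^n)" using \<kappa> by (intro summable_mult summable_geometric) simp
  then have sd: "summable (\<lambda>n. \<bar>d n\<bar>)"
    by (rule summable_comparison_test[rotated]) (use inc in \<open>auto simp: d_def\<close>)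
  have f: "f n = f 0 + (\<Sum>i<n. d i)" for n unfolding d_def by (simp add: sum_lessThan_telescope)
  define L where "L = f 0 + suminf d"
  have "(\<lambda>n. f 0 + (\<Sum>i<n. d i)) \<longlonglongrightarrow> L"
    unfolding L_def by (intro tendsto_add tendsto_const summable_LIMSEQ summable_rabs_cancel[OF sd])
  then have "f \<longlonglongrightarrow> L" by (simp flip: f)
  moreover have "\<bar>f n - L\<bar> \<le> C * \<kappa>^n / (1 - \<kappa>)" for n
  proof -
    have shift: "summable (\<lambda>k. \<bar>d (k + n)\<bar>)" using sd summable_iff_shift[of "\<lambda>k. \<bar>d k\<bar>" n] by simp
    have "\<bar>f n - L\<bar> = \<bar>\<Sum>k. d (k + n)\<bar>"
      using suminf_split_initial_segment[OF summable_rabs_cancel[OF sd], of n] f[of n]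
      by (simp add: L_def)
    also have "\<dots> \<le> (\<Sum>k. \<bar>d (k + n)\<bar>)" by (rule summable_rabs[OF shift])
    also have "\<dots> \<le> (\<Sum>k. C * \<kappa>^n * \<kappa>^k)"
    proof (rule suminf_le[OF _ shift])
      show "summable (\<lambda>k. C * \<kappa>^n * \<kappa>^k)" using \<kappa> by (intro summable_mult summable_geometric) simp
      show "\<bar>d (k + n)\<bar> \<le> C * \<kappa>^n * \<kappa>^k" for k
        using inc[of "k + n"] by (simp add: d_def power_add algebra_simps)
    qed
    also have "\<dots> = C * \<kappa>^n / (1 - \<kappa>)" using \<kappa> by (simp add: suminf_mult suminf_geometric)
    finally show ?thesis .
  qed
  ultimately show thesis by (rule that)
qed

lemma eq_0_if_abs_le_geometric:
  fixes z C \<kappa> :: real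
  assumes "0 \<le> \<kappa>" "\<kappa> < 1" and "\<And>n. \<bar>z\<bar> \<le> C * \<kappa>^n"
  shows "z = 0"
proof -
  have "(\<lambda>n. C * \<kappa>^n) \<longlonglongrightarrow> C * 0" using assms(1,2) by (intro tendsto_mult tendsto_const LIMSEQ_power_zero) simp
  then have "\<bar>z\<bar> \<le> C * 0" by (rule LIMSEQ_le_const) (use assms(3) in auto)
  then show ?thesis by simp
qed

lemma common_shift_exists:
  fixes f :: "'a \<Rightarrow> real" and g :: "'b \<Rightarrow> real"
  assumes f: "\<And>x x'. f x - f x' \<le> 2 * r" and g: "\<And>y y'. g y - g y' \<le> 2 * r"
    and fg: "\<And>x y. \<bar>f x + g y\<bar> \<le> 2 * r"
  shows "\<exists>t. (\<forall>x. \<bar>f x - t\<bar> \<le> r) \<and> (\<forall>y. \<bar>g y + t\<bar> \<le> r)"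
proof -
  \<comment> \<open>The intervals \<open>[f x - r, f x + r]\<close> and \<open>[- g y - r, - g y + r]\<close> meet pairwise, hence (Helly) all together.\<close>
  define L where "L = range (\<lambda>x. f x - r) \<union> range (\<lambda>y. - g y - r)"
  have "f x - r \<le> f undefined + r" "- g y - r \<le> f undefined + r" for x y
    using f[of x undefined] fg[of undefined y] by (auto simp: abs_le_iff)
  then have L: "L \<noteq> {}" "bdd_above L" by (auto simp: L_def intro!: bdd_aboveI[of _ "f undefined + r"])
  have "f x - r \<le> Sup L" "- g y - r \<le> Sup L" for x y
    using L(2) by (auto intro: cSup_upper simp: L_def)
  moreover have "Sup L \<le> f x + r" for x
  proof (rule cSup_least[OF L(1)])
    fix l assume "l \<in> L"
    then consider x' where "l = f x' - r" | y where "l = - g y - r" unfolding L_def by blast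
    then show "l \<le> f x + r"
    proof cases
      case (1 x')
      then show ?thesis using f[of x' x] by simp
    next
      case (2 y)
      then show ?thesis using fg[of x y] by (simp add: abs_le_iff)
    qed
  qed
  moreover have "Sup L \<le> - g y + r" for y
  proof (rule cSup_least[OF L(1)])
    fix l assume "l \<in> L"
    then consider x where "l = f x - r" | y' where "l = - g y' - r" unfolding L_def by blast
    then show "l \<le> - g y + r"
    proof cases
      case (1 x)
      then show ?thesis using fg[of x y] by (simp add: abs_le_iff)
    next
      case (2 y')
      then show ?thesis using g[of y y'] by simp
    qed
  qed
  ultimately have "\<bar>f x - Sup L\<bar> \<le> r" "\<bar>g y + Sup L\<bar> \<le> r" for x y
    by (smt (verit))+
  then show ?thesis by (intro exI[of _ "Sup L"]) simp
qed

lemma ereal_abs_diff_le: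
  fixes a b d1 d2 :: real and S :: ereal
  assumes "a - b \<le> d1" "b - a \<le> d2" "ereal \<bar>d1\<bar> \<le> S" "ereal \<bar>d2\<bar> \<le> S"
  shows "ereal \<bar>a - b\<bar> \<le> S"
proof (cases "b \<le> a")
  case True
  then have "ereal \<bar>a - b\<bar> \<le> ereal \<bar>d1\<bar>" using assms(1) by simp
  then show ?thesis using assms(3) by (rule order_trans)
next
  case False
  then have "ereal \<bar>a - b\<bar> \<le> ereal \<bar>d2\<bar>" using assms(2) by simp
  then show ?thesis using assms(4) by (rule order_trans)
qed

lemma distr_fst_density_pair:
  assumes N: "sigma_finite_measure N"
    and g: "g \<in> borel_measurable (M \<Otimes>\<^sub>M N)"
    and marg: "\<And>x. x \<in> space M \<Longrightarrow> (\<integral>\<^sup>+y. g (x, y) \<partial>N) = 1"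
  shows "distr (density (M \<Otimes>\<^sub>M N) g) M fst = M"
proof (rule measure_eqI)
  interpret N: sigma_finite_measure N by (rule N)
  fix A assume "A \<in> sets (distr (density (M \<Otimes>\<^sub>M N) g) M fst)"
  then have A: "A \<in> sets M" by simp
  have "fst -` A \<inter> space (M \<Otimes>\<^sub>M N) = A \<times> space N"
    using sets.sets_into_space[OF A] by (auto simp: space_pair_measure)
  then have "emeasure (distr (density (M \<Otimes>\<^sub>M N) g) M fst) A
      = (\<integral>\<^sup>+z. g z * indicator (A \<times> space N) z \<partial>(M \<Otimes>\<^sub>M N))"
    using A g by (simp add: emeasure_distr emeasure_density)
  also have "\<dots> = (\<integral>\<^sup>+x. \<integral>\<^sup>+y. g (x, y) * indicator A x \<partial>N \<partial>M)"
    using A g by (subst N.nn_integral_fst[symmetric]) (auto intro!: nn_integral_cong simp: indicator_def)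
  also have "\<dots> = (\<integral>\<^sup>+x. indicator A x \<partial>M)"
    using g marg by (intro nn_integral_cong) (simp add: nn_integral_multc measurable_Pair2)
  finally show "emeasure (distr (density (M \<Otimes>\<^sub>M N) g) M fst) A = emeasure M A"
    using A by simp
qed simp

lemma distr_snd_density_pair:
  assumes M: "sigma_finite_measure M" and N: "sigma_finite_measure N"
    and g: "g \<in> borel_measurable (M \<Otimes>\<^sub>M N)"
    and marg: "\<And>y. y \<in> space N \<Longrightarrow> (\<integral>\<^sup>+x. g (x, y) \<partial>M) = 1"
  shows "distr (density (M \<Otimes>\<^sub>M N) g) N snd = N"
proof (rule measure_eqI)
  interpret pair_sigma_finite M N using M N by (simp add: pair_sigma_finite_def)
  fix A assume "A \<in> sets (distr (density (M \<Otimes>\<^sub>M N) g) N snd)"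
  then have A: "A \<in> sets N" by simp
  have "snd -` A \<inter> space (M \<Otimes>\<^sub>M N) = space M \<times> A"
    using sets.sets_into_space[OF A] by (auto simp: space_pair_measure)
  then have "emeasure (distr (density (M \<Otimes>\<^sub>M N) g) N snd) A
      = (\<integral>\<^sup>+z. g z * indicator (space M \<times> A) z \<partial>(M \<Otimes>\<^sub>M N))"
    using A g by (simp add: emeasure_distr emeasure_density)
  also have "\<dots> = (\<integral>\<^sup>+y. \<integral>\<^sup>+x. g (x, y) * indicator A y \<partial>M \<partial>N)"
    using A g by (subst nn_integral_snd[symmetric]) (auto intro!: nn_integral_cong simp: indicator_def)
  also have "\<dots> = (\<integral>\<^sup>+y. indicator A y \<partial>N)"
    using g marg by (intro nn_integral_cong) (simp add: nn_integral_multc measurable_Pair1)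
  finally show "emeasure (distr (density (M \<Otimes>\<^sub>M N) g) N snd) A = emeasure N A"
    using A by simp
qed simp

lemma density_pair_in_couplings:
  assumes M: "prob_space M" and N: "prob_space N"
    and g: "g \<in> borel_measurable (M \<Otimes>\<^sub>M N)"
    and marg_fst: "\<And>x. x \<in> space M \<Longrightarrow> (\<integral>\<^sup>+y. g (x, y) \<partial>N) = 1"
    and marg_snd: "\<And>y. y \<in> space N \<Longrightarrow> (\<integral>\<^sup>+x. g (x, y) \<partial>M) = 1"
  shows "density (M \<Otimes>\<^sub>M N) g \<in> couplings M N"
proof -
  have sf: "sigma_finite_measure M" "sigma_finite_measure N"
    using M N by (simp_all add: prob_space_imp_sigma_finite)
  have d1: "distr (density (M \<Otimes>\<^sub>M N) g) M fst = M"
    by (rule distr_fst_density_pair[OF sf(2) g marg_fst])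
  have "prob_space (density (M \<Otimes>\<^sub>M N) g)"
    by (rule prob_space_distrD[of fst _ M]) (use d1 M in simp_all)
  then show ?thesis
    unfolding couplings_def using d1 distr_snd_density_pair[OF sf g marg_snd] by simp
qed

lemma integral_couplings_split:
  fixes f :: "'a::topological_space \<Rightarrow> 'c::{banach, second_countable_topology}"
    and g :: "'b::topological_space \<Rightarrow> 'c"
  assumes \<pi>: "\<pi> \<in> couplings M N" and f: "integrable M f" and g: "integrable N g"
  shows "(\<integral>z. f (fst z) + g (snd z) \<partial>\<pi>) = (\<integral>x. f x \<partial>M) + (\<integral>y. g y \<partial>N)"
proof -
  have sets: "sets \<pi> = sets (M \<Otimes>\<^sub>M N)" and d1: "distr \<pi> M fst = M" and d2: "distr \<pi> N snd = N"
    using \<pi> by (auto simp: couplings_def)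
  have fst: "fst \<in> \<pi> \<rightarrow>\<^sub>M M" and snd: "snd \<in> \<pi> \<rightarrow>\<^sub>M N"
    by (simp_all add: measurable_cong_sets[OF sets refl])
  have "integrable \<pi> (\<lambda>z. f (fst z))" "(\<integral>z. f (fst z) \<partial>\<pi>) = (\<integral>x. f x \<partial>M)"
    using integrable_distr_eq[OF fst, of f] integral_distr[OF fst, of f] f by (simp_all add: d1)
  moreover have "integrable \<pi> (\<lambda>z. g (snd z))" "(\<integral>z. g (snd z) \<partial>\<pi>) = (\<integral>y. g y \<partial>N)"
    using integrable_distr_eq[OF snd, of g] integral_distr[OF snd, of g] g by (simp_all add: d2)
  ultimately show ?thesis by simp
qed

lemma nn_integral_div_RN_deriv_le:
  assumes P: "sigma_finite_measure P" and \<pi>: "sigma_finite_measure \<pi>"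
    and ac: "absolutely_continuous P \<pi>" and sets: "sets \<pi> = sets P"
    and u: "u \<in> borel_measurable P" "\<And>z. 0 \<le> u z"
  shows "(\<integral>\<^sup>+z. ennreal (u z / enn2real (RN_deriv P \<pi> z)) \<partial>\<pi>) \<le> (\<integral>\<^sup>+z. ennreal (u z) \<partial>P)"
proof -
  interpret sigma_finite_measure P by (rule P)
  define f where "f = RN_deriv P \<pi>"
  have f[measurable]: "f \<in> borel_measurable P" by (simp add: f_def)
  have "f z * ennreal (u z / enn2real (f z)) \<le> ennreal (u z)" for z
  proof (cases "f z = 0 \<or> f z = \<infinity>")
    case False
    then obtain r where "f z = ennreal r" "0 < r"
      by (cases "f z") (auto simp: zero_less_iff_neq_zero)
    then show ?thesis using u(2)[of z] by (simp add: ennreal_mult[symmetric])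
  qed auto
  then have "(\<integral>\<^sup>+z. f z * ennreal (u z / enn2real (f z)) \<partial>P) \<le> (\<integral>\<^sup>+z. ennreal (u z) \<partial>P)"
    by (intro nn_integral_mono)
  moreover have "density P f = \<pi>" unfolding f_def by (rule density_RN_deriv[OF ac sets])
  ultimately show ?thesis
    using u(1) by (subst (asm) nn_integral_density[symmetric]) (simp_all add: f_def)
qed

lemma integral_le_KL:
  fixes h :: "'a \<Rightarrow> real"
  assumes \<pi>: "prob_space \<pi>" and P: "sigma_finite_measure P" and sets: "sets \<pi> = sets P"
    and h: "h \<in> borel_measurable P" "integrable \<pi> h"
    and exp_h: "integrable P (\<lambda>z. exp (h z))" "(\<integral>z. exp (h z) \<partial>P) \<le> 1"
  shows "ereal (\<integral>z. h z \<partial>\<pi>) \<le> KL \<pi> P"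
proof (cases "KL \<pi> P = \<infinity>")
  case False
  interpret prob_space \<pi> by (rule \<pi>)
  define f where "f = RN_deriv P \<pi>"
  define l where "l z = ln (enn2real (f z))" for z
  define q where "q z = exp (h z) / enn2real (f z)" for z
  have ac: "absolutely_continuous P \<pi>" and l: "integrable \<pi> l" and KL: "KL \<pi> P = ereal (\<integral>z. l z \<partial>\<pi>)"
    using False unfolding KL_def f_def l_def by (auto split: if_splits)
  have q_meas: "q \<in> borel_measurable \<pi>"
    using h(1) unfolding q_def f_def measurable_cong_sets[OF sets refl] by measurable
  \<comment> \<open>Gibbs: \<open>h - l \<le> q - 1\<close> pointwise, and \<open>\<integral>q d\<pi> \<le> \<integral>exp h dP \<le> 1\<close>.\<close>
  have "(\<integral>\<^sup>+z. ennreal (q z) \<partial>\<pi>) \<le> (\<integral>\<^sup>+z. ennreal (exp (h z)) \<partial>P)"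
    unfolding q_def f_def
    by (rule nn_integral_div_RN_deriv_le[OF P _ ac sets]) (use h(1) in \<open>simp_all add: prob_space_imp_sigma_finite \<pi>\<close>)
  also have "\<dots> \<le> 1" using exp_h by (simp add: nn_integral_eq_integral)
  finally have nn_q: "(\<integral>\<^sup>+z. ennreal (q z) \<partial>\<pi>) \<le> 1" .
  have q_int: "integrable \<pi> q"
    using q_meas nn_q by (intro integrableI_nonneg) (auto simp: q_def intro: le_less_trans)
  have "(\<integral>z. q z \<partial>\<pi>) = enn2real (\<integral>\<^sup>+z. ennreal (q z) \<partial>\<pi>)"
    using q_meas by (rule integral_eq_nn_integral) (simp add: q_def)
  also have "\<dots> \<le> 1" using nn_q by (intro enn2real_leI) auto
  finally have q: "integrable \<pi> q" "(\<integral>z. q z \<partial>\<pi>) \<le> 1" using q_int by auto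
  have dens: "density P f = \<pi>"
    unfolding f_def by (rule sigma_finite_measure.density_RN_deriv[OF P ac sets])
  have "AE z in \<pi>. f z \<noteq> \<infinity>"
    using sigma_finite_measure.RN_deriv_finite[OF P prob_space_imp_sigma_finite[OF \<pi>] ac sets]
    unfolding f_def by (rule absolutely_continuous_AE[OF sets ac])
  moreover have "AE z in \<pi>. 0 < f z"
    unfolding dens[symmetric] by (subst AE_density) (auto simp: f_def)
  ultimately have "AE z in \<pi>. 0 < enn2real (f z)"
    by eventually_elim (simp add: enn2real_positive_iff less_top)
  then have "AE z in \<pi>. h z + 1 - q z \<le> l z"
  proof eventually_elim
    case (elim z)
    have "ln (exp (h z) / enn2real (f z)) \<le> exp (h z) / enn2real (f z) - 1"
      using elim by (intro ln_le_minus_one) simp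
    then show ?case using elim by (simp add: q_def l_def ln_div)
  qed
  then have "(\<integral>z. h z + 1 - q z \<partial>\<pi>) \<le> (\<integral>z. l z \<partial>\<pi>)"
    using h(2) q(1) l by (intro integral_mono_AE) auto
  moreover have "(\<integral>z. h z + 1 - q z \<partial>\<pi>) = (\<integral>z. h z \<partial>\<pi>) + 1 - (\<integral>z. q z \<partial>\<pi>)"
    using h(2) q(1) by (simp add: prob_space)
  ultimately show ?thesis using q(2) KL by simp
qed simp

lemma KL_density_exp:
  fixes h :: "'a \<Rightarrow> real"
  assumes P: "sigma_finite_measure P" and h: "h \<in> borel_measurable P"
    and int: "integrable (density P (\<lambda>z. ennreal (exp (h z)))) h"
  shows "KL (density P (\<lambda>z. ennreal (exp (h z)))) P
       = ereal (\<integral>z. h z \<partial>density P (\<lambda>z. ennreal (exp (h z))))"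
proof -
  interpret sigma_finite_measure P by (rule P)
  define \<pi> where "\<pi> = density P (\<lambda>z. ennreal (exp (h z)))"
  have sets: "sets \<pi> = sets P" by (simp add: \<pi>_def)
  have ac: "absolutely_continuous P \<pi>"
    unfolding \<pi>_def using h by (intro absolutely_continuousI_density) measurable
  have "AE z in P. ennreal (exp (h z)) = RN_deriv P \<pi> z"
    using h by (intro RN_deriv_unique) (simp_all add: \<pi>_def)
  then have "AE z in P. ln (enn2real (RN_deriv P \<pi> z)) = h z"
    by eventually_elim (metis enn2real_ennreal exp_ge_zero ln_exp)
  then have "AE z in \<pi>. ln (enn2real (RN_deriv P \<pi> z)) = h z"
    by (rule absolutely_continuous_AE[OF sets ac])
  moreover have meas: "(\<lambda>z. ln (enn2real (RN_deriv P \<pi> z))) \<in> borel_measurable \<pi>" "h \<in> borel_measurable \<pi>"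
    using h by (simp_all add: \<pi>_def)
  ultimately have "integrable \<pi> (\<lambda>z. ln (enn2real (RN_deriv P \<pi> z)))"
    and "(\<integral>z. ln (enn2real (RN_deriv P \<pi> z)) \<partial>\<pi>) = (\<integral>z. h z \<partial>\<pi>)"
    using int by (simp_all add: integrable_cong_AE[OF meas] integral_cong_AE[OF meas] flip: \<pi>_def)
  then show ?thesis using sets ac unfolding KL_def \<pi>_def[symmetric] by simp
qed

definition bounded_borel :: "('a::topological_space \<Rightarrow> real) \<Rightarrow> real \<Rightarrow> real \<Rightarrow> bool" where
  "bounded_borel f lo hi \<longleftrightarrow> f \<in> borel_measurable borel \<and> (\<forall>y. lo \<le> f y \<and> f y \<le> hi)"

lemma bounded_borelD:
  "bounded_borel f lo hi \<Longrightarrow> f \<in> borel_measurable borel"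
  "bounded_borel f lo hi \<Longrightarrow> lo \<le> f y"
  "bounded_borel f lo hi \<Longrightarrow> f y \<le> hi"
  by (simp_all add: bounded_borel_def)

lemma bounded_borel_add_const: "bounded_borel f lo hi \<Longrightarrow> bounded_borel (\<lambda>y. f y + t) (lo + t) (hi + t)"
  by (auto simp: bounded_borel_def)

lemma bounded_borel_abs_le: "bounded_borel f lo hi \<Longrightarrow> \<bar>f y\<bar> \<le> \<bar>lo\<bar> + \<bar>hi\<bar>"
  unfolding bounded_borel_def by (smt (verit))

lemma borel_prob_measurable_eq: "borel_prob M \<Longrightarrow> borel_measurable M = borel_measurable borel"
  unfolding borel_prob_def by (intro measurable_cong_sets) auto

lemma borel_prob_integrable_bounded:
  fixes f :: "'a::topological_space \<Rightarrow> real"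
  assumes M: "borel_prob M" and f: "f \<in> borel_measurable borel" and bnd: "\<And>y. \<bar>f y\<bar> \<le> B"
  shows "integrable M f"
proof -
  interpret prob_space M using M by (simp add: borel_prob_def)
  show ?thesis
    using f bnd by (intro integrable_const_bound[of _ B]) (simp_all add: borel_prob_measurable_eq[OF M])
qed

lemma integrable_bounded_borel:
  "borel_prob M \<Longrightarrow> bounded_borel f lo hi \<Longrightarrow> integrable M f"
  by (rule borel_prob_integrable_bounded) (auto dest: bounded_borelD bounded_borel_abs_le)

lemma sets_pair_borel_prob:
  "borel_prob \<mu> \<Longrightarrow> borel_prob \<nu> \<Longrightarrow> sets (\<mu> \<Otimes>\<^sub>M \<nu>) = sets (borel \<Otimes>\<^sub>M borel)"
  by (intro sets_pair_measure_cong) (simp_all add: borel_prob_def)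

lemma prob_space_pair_borel_prob:
  assumes "borel_prob \<mu>" "borel_prob \<nu>"
  shows "prob_space (\<mu> \<Otimes>\<^sub>M \<nu>)"
proof -
  interpret M: prob_space \<mu> using assms(1) by (simp add: borel_prob_def)
  interpret N: prob_space \<nu> using assms(2) by (simp add: borel_prob_def)
  interpret pair_prob_space \<mu> \<nu> ..
  show ?thesis by unfold_locales
qed

lemma integrable_bounded_pair:
  fixes f :: "'a::topological_space \<times> 'b::topological_space \<Rightarrow> real"
  assumes "prob_space P" "sets P = sets (borel \<Otimes>\<^sub>M borel)"
    and "f \<in> borel_measurable (borel \<Otimes>\<^sub>M borel)" "\<And>z. \<bar>f z\<bar> \<le> B"
  shows "integrable P f"
proof -
  interpret prob_space P by fact
  have "f \<in> borel_measurable P" using assms(3) by (simp add: measurable_cong_sets[OF assms(2) refl])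
  then show ?thesis using assms(4) by (intro integrable_const_bound[of _ B]) simp_all
qed

lemma couplings_borel:
  assumes \<mu>: "borel_prob \<mu>" and \<nu>: "borel_prob \<nu>" and \<pi>: "\<pi> \<in> couplings \<mu> \<nu>"
  shows "prob_space \<pi>" "sets \<pi> = sets (borel \<Otimes>\<^sub>M borel)"
  using \<pi> sets_pair_borel_prob[OF \<mu> \<nu>] by (simp_all add: couplings_def)

lemma ctransY_eq_ctransX_swap: "ctransY c \<epsilon> \<mu> \<phi> = ctransX (\<lambda>y x. c x y) \<epsilon> \<mu> \<phi>"
  by (simp add: ctransX_def ctransY_def fun_eq_iff)

locale bounded_cost =
  fixes c :: "'x::topological_space \<Rightarrow> 'y::topological_space \<Rightarrow> real" and \<epsilon> :: real
  assumes cost_measurable: "(\<lambda>z. c (fst z) (snd z)) \<in> borel_measurable (borel \<Otimes>\<^sub>M borel)"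
    and cost_bounded: "\<And>x y. \<bar>c x y\<bar> \<le> 1"
    and eps_pos: "0 < \<epsilon>"
begin

lemma cost_measurable_snd [measurable]: "(\<lambda>y. c x y) \<in> borel_measurable borel"
  using measurable_Pair2[OF cost_measurable, of x] by simp

lemma bounded_cost_swap: "bounded_cost (\<lambda>y x. c x y) \<epsilon>"
proof
  note [measurable] = cost_measurable
  have "(\<lambda>z. (\<lambda>w. c (fst w) (snd w)) (snd z, fst z)) \<in> borel_measurable (borel \<Otimes>\<^sub>M borel)"
    by measurable
  then show "(\<lambda>z. c (snd z) (fst z)) \<in> borel_measurable (borel \<Otimes>\<^sub>M borel)" by simp
qed (use cost_bounded eps_pos in auto)

lemma exp_cost_bounds: "exp (-1/\<epsilon>) \<le> exp (- c x y / \<epsilon>)" "exp (- c x y / \<epsilon>) \<le> exp (1/\<epsilon>)"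
  using cost_bounded[of x y] eps_pos by (auto simp: abs_le_iff field_simps)

definition partition_fn :: "'y measure \<Rightarrow> ('y \<Rightarrow> real) \<Rightarrow> 'x \<Rightarrow> real" where
  "partition_fn \<nu> \<psi> x = (\<integral>y. exp ((\<psi> y - c x y) / \<epsilon>) \<partial>\<nu>)"

lemma ctransX_eq_partition_fn: "ctransX c \<epsilon> \<nu> \<psi> x = - \<epsilon> * ln (partition_fn \<nu> \<psi> x)"
  by (simp add: ctransX_def partition_fn_def)

lemma integrable_exp_bounded:
  fixes h :: "'y \<Rightarrow> real"
  assumes \<nu>: "borel_prob \<nu>" and h: "h \<in> borel_measurable borel" and bnd: "\<And>y. h y \<le> B"
  shows "integrable \<nu> (\<lambda>y. exp (h y))"
  by (rule borel_prob_integrable_bounded[OF \<nu>, of _ "exp B"]) (use h bnd in auto)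

lemma integrable_gibbs_kernel:
  assumes \<nu>: "borel_prob \<nu>" and \<psi>: "bounded_borel \<psi> lo hi"
  shows "integrable \<nu> (\<lambda>y. exp ((\<psi> y - c x y) / \<epsilon>))"
proof (rule integrable_exp_bounded[OF \<nu>, where B = "(hi + 1) / \<epsilon>"])
  show "(\<lambda>y. (\<psi> y - c x y) / \<epsilon>) \<in> borel_measurable borel"
    using bounded_borelD(1)[OF \<psi>] by measurable
  show "(\<psi> y - c x y) / \<epsilon> \<le> (hi + 1) / \<epsilon>" for y
    using bounded_borelD(3)[OF \<psi>, of y] cost_bounded[of x y] eps_pos
    by (auto simp: divide_right_mono abs_le_iff)
qed

lemma partition_fn_bounds:
  assumes \<nu>: "borel_prob \<nu>" and \<psi>: "bounded_borel \<psi> lo hi"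
  shows "exp ((lo - 1) / \<epsilon>) \<le> partition_fn \<nu> \<psi> x" "partition_fn \<nu> \<psi> x \<le> exp ((hi + 1) / \<epsilon>)"
proof -
  interpret prob_space \<nu> using \<nu> by (simp add: borel_prob_def)
  have "lo - 1 \<le> \<psi> y - c x y" "\<psi> y - c x y \<le> hi + 1" for y
    using bounded_borelD(2,3)[OF \<psi>, of y] cost_bounded[of x y] by (auto simp: abs_le_iff)
  then have "exp ((lo - 1) / \<epsilon>) \<le> exp ((\<psi> y - c x y) / \<epsilon>)"
      "exp ((\<psi> y - c x y) / \<epsilon>) \<le> exp ((hi + 1) / \<epsilon>)" for y
    using eps_pos by (simp_all add: divide_right_mono)
  then show "exp ((lo - 1) / \<epsilon>) \<le> partition_fn \<nu> \<psi> x" "partition_fn \<nu> \<psi> x \<le> exp ((hi + 1) / \<epsilon>)"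
    using integral_mono[OF _ integrable_gibbs_kernel[OF \<nu> \<psi>], of "\<lambda>_. exp ((lo - 1) / \<epsilon>)"]
      integral_mono[OF integrable_gibbs_kernel[OF \<nu> \<psi>], of "\<lambda>_. exp ((hi + 1) / \<epsilon>)"]
    unfolding partition_fn_def by (simp_all add: prob_space)
qed

lemma partition_fn_pos: "borel_prob \<nu> \<Longrightarrow> bounded_borel \<psi> lo hi \<Longrightarrow> 0 < partition_fn \<nu> \<psi> x"
  using partition_fn_bounds(1) by (rule less_le_trans[OF exp_gt_zero])

lemma ctransX_bounds:
  assumes \<nu>: "borel_prob \<nu>" and \<psi>: "bounded_borel \<psi> lo hi"
  shows "- hi - 1 \<le> ctransX c \<epsilon> \<nu> \<psi> x" "ctransX c \<epsilon> \<nu> \<psi> x \<le> 1 - lo"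
proof -
  have Z: "0 < partition_fn \<nu> \<psi> x" by (rule partition_fn_pos[OF \<nu> \<psi>])
  have "(lo - 1) / \<epsilon> \<le> ln (partition_fn \<nu> \<psi> x)"
    using partition_fn_bounds(1)[OF \<nu> \<psi>, of x] Z by (simp add: ln_ge_iff)
  moreover have "ln (partition_fn \<nu> \<psi> x) \<le> ln (exp ((hi + 1) / \<epsilon>))"
    using partition_fn_bounds(2)[OF \<nu> \<psi>, of x] Z by (subst ln_le_cancel_iff) auto
  ultimately have "(lo - 1) / \<epsilon> \<le> ln (partition_fn \<nu> \<psi> x)" "ln (partition_fn \<nu> \<psi> x) \<le> (hi + 1) / \<epsilon>"
    by simp_all
  then show "- hi - 1 \<le> ctransX c \<epsilon> \<nu> \<psi> x" "ctransX c \<epsilon> \<nu> \<psi> x \<le> 1 - lo"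
    unfolding ctransX_eq_partition_fn using eps_pos by (simp_all add: field_simps)
qed

lemma ctransX_measurable:
  assumes \<nu>: "borel_prob \<nu>" and \<psi>: "bounded_borel \<psi> lo hi"
  shows "ctransX c \<epsilon> \<nu> \<psi> \<in> borel_measurable borel"
proof -
  have sets: "sets (borel \<Otimes>\<^sub>M \<nu>) = sets (borel \<Otimes>\<^sub>M borel)"
    using \<nu> by (intro sets_pair_measure_cong) (simp_all add: borel_prob_def)
  note [measurable] = cost_measurable[folded measurable_cong_sets[OF sets refl]]
  note [measurable] = bounded_borelD(1)[OF \<psi>, folded borel_prob_measurable_eq[OF \<nu>]]
  interpret prob_space \<nu> using \<nu> by (simp add: borel_prob_def)
  show ?thesis unfolding ctransX_def by measurable
qed

lemma bounded_borel_ctransX: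
  assumes \<nu>: "borel_prob \<nu>" and \<psi>: "bounded_borel \<psi> lo hi"
  shows "bounded_borel (ctransX c \<epsilon> \<nu> \<psi>) (- hi - 1) (1 - lo)"
  unfolding bounded_borel_def using ctransX_bounds[OF \<nu> \<psi>] ctransX_measurable[OF \<nu> \<psi>] by blast

lemma ctransX_add_const:
  assumes \<nu>: "borel_prob \<nu>" and \<psi>: "bounded_borel \<psi> lo hi"
  shows "ctransX c \<epsilon> \<nu> (\<lambda>y. \<psi> y + t) x = ctransX c \<epsilon> \<nu> \<psi> x - t"
proof -
  have "partition_fn \<nu> (\<lambda>y. \<psi> y + t) x = (\<integral>y. exp (t / \<epsilon>) * exp ((\<psi> y - c x y) / \<epsilon>) \<partial>\<nu>)"
    unfolding partition_fn_def by (simp add: exp_add[symmetric] add_divide_distrib[symmetric] algebra_simps)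
  then have "partition_fn \<nu> (\<lambda>y. \<psi> y + t) x = exp (t / \<epsilon>) * partition_fn \<nu> \<psi> x"
    by (simp add: partition_fn_def)
  then show ?thesis
    unfolding ctransX_eq_partition_fn using partition_fn_pos[OF \<nu> \<psi>, of x] eps_pos
    by (simp add: ln_mult field_simps)
qed

lemma ctransX_antimono:
  assumes \<nu>: "borel_prob \<nu>" and \<psi>1: "bounded_borel \<psi>1 lo1 hi1" and \<psi>2: "bounded_borel \<psi>2 lo2 hi2"
    and le: "\<And>y. \<psi>1 y \<le> \<psi>2 y"
  shows "ctransX c \<epsilon> \<nu> \<psi>2 x \<le> ctransX c \<epsilon> \<nu> \<psi>1 x"
proof -
  have "partition_fn \<nu> \<psi>1 x \<le> partition_fn \<nu> \<psi>2 x"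
    unfolding partition_fn_def
    by (rule integral_mono[OF integrable_gibbs_kernel[OF \<nu> \<psi>1] integrable_gibbs_kernel[OF \<nu> \<psi>2]])
       (use le eps_pos in \<open>simp add: divide_right_mono\<close>)
  then show ?thesis
    unfolding ctransX_eq_partition_fn using partition_fn_pos[OF \<nu> \<psi>1] partition_fn_pos[OF \<nu> \<psi>2] eps_pos
    by simp
qed

lemma ctransX_nonexpansive:
  assumes \<nu>: "borel_prob \<nu>" and \<psi>1: "bounded_borel \<psi>1 lo1 hi1" and \<psi>2: "bounded_borel \<psi>2 lo2 hi2"
    and d: "\<And>y. \<bar>\<psi>1 y - \<psi>2 y\<bar> \<le> d"
  shows "\<bar>ctransX c \<epsilon> \<nu> \<psi>1 x - ctransX c \<epsilon> \<nu> \<psi>2 x\<bar> \<le> d"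
proof -
  have "ctransX c \<epsilon> \<nu> (\<lambda>y. \<psi>2 y + d) x \<le> ctransX c \<epsilon> \<nu> \<psi>1 x"
    by (rule ctransX_antimono[OF \<nu> \<psi>1 bounded_borel_add_const[OF \<psi>2]]) (use d in \<open>smt (verit)\<close>)
  moreover have "ctransX c \<epsilon> \<nu> (\<lambda>y. \<psi>1 y + d) x \<le> ctransX c \<epsilon> \<nu> \<psi>2 x"
    by (rule ctransX_antimono[OF \<nu> \<psi>2 bounded_borel_add_const[OF \<psi>1]]) (use d in \<open>smt (verit)\<close>)
  ultimately show ?thesis
    using ctransX_add_const[OF \<nu> \<psi>1, of d x] ctransX_add_const[OF \<nu> \<psi>2, of d x] by linarith
qed

lemma ctransX_oscillation:
  assumes \<nu>: "borel_prob \<nu>" and \<psi>: "bounded_borel \<psi> lo hi"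
  shows "ctransX c \<epsilon> \<nu> \<psi> x - ctransX c \<epsilon> \<nu> \<psi> x' \<le> 2"
proof -
  have "exp ((\<psi> y - c x' y) / \<epsilon>) \<le> exp (2 / \<epsilon>) * exp ((\<psi> y - c x y) / \<epsilon>)" for y
  proof -
    have "\<psi> y - c x' y \<le> 2 + (\<psi> y - c x y)"
      using cost_bounded[of x y] cost_bounded[of x' y] by (auto simp: abs_le_iff)
    then show ?thesis
      using eps_pos by (simp add: exp_add[symmetric] add_divide_distrib[symmetric] divide_right_mono)
  qed
  then have "partition_fn \<nu> \<psi> x' \<le> exp (2 / \<epsilon>) * partition_fn \<nu> \<psi> x"
    unfolding partition_fn_def using integrable_gibbs_kernel[OF \<nu> \<psi>]
    by (subst integral_mult_right_zero[symmetric]) (intro integral_mono; simp)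
  then have "ln (partition_fn \<nu> \<psi> x') \<le> ln (exp (2 / \<epsilon>) * partition_fn \<nu> \<psi> x)"
    using partition_fn_pos[OF \<nu> \<psi>] by (subst ln_le_cancel_iff) auto
  also have "\<dots> = 2 / \<epsilon> + ln (partition_fn \<nu> \<psi> x)"
    using partition_fn_pos[OF \<nu> \<psi>, of x] by (simp add: ln_mult)
  finally show ?thesis unfolding ctransX_eq_partition_fn using eps_pos by (simp add: field_simps)
qed

definition theta :: real where "theta = exp (- 2 / \<epsilon>)"

definition contraction_rate :: "real \<Rightarrow> real" where
  "contraction_rate D = (1 - theta) * exp (D / \<epsilon>) / (theta + (1 - theta) * exp (D / \<epsilon>))"

lemma theta_bounds: "0 < theta" "theta < 1"
  unfolding theta_def using eps_pos by auto

lemma contraction_rate_bounds: "0 \<le> contraction_rate D" "contraction_rate D < 1"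
  unfolding contraction_rate_def using theta_bounds
  by (simp_all add: add_pos_pos divide_less_eq)

lemma partition_fn_ratio_bounds:
  assumes \<nu>: "borel_prob \<nu>" and \<psi>1: "bounded_borel \<psi>1 lo1 hi1" and \<psi>2: "bounded_borel \<psi>2 lo2 hi2"
    and m: "\<And>y. m \<le> \<psi>1 y - \<psi>2 y" and M: "\<And>y. \<psi>1 y - \<psi>2 y \<le> M"
  defines "A \<equiv> (\<integral>y. exp (\<psi>1 y / \<epsilon>) \<partial>\<nu>) / (\<integral>y. exp (\<psi>2 y / \<epsilon>) \<partial>\<nu>)"
  shows "exp (m / \<epsilon>) \<le> A"
    and "theta * A + (1 - theta) * exp (m / \<epsilon>) \<le> partition_fn \<nu> \<psi>1 x / partition_fn \<nu> \<psi>2 x"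
    and "partition_fn \<nu> \<psi>1 x / partition_fn \<nu> \<psi>2 x \<le> theta * A + (1 - theta) * exp (M / \<epsilon>)"
proof -
  interpret prob_space \<nu> using \<nu> by (simp add: borel_prob_def)
  note [measurable] = bounded_borelD(1)[OF \<psi>1] bounded_borelD(1)[OF \<psi>2]
  have kernel: "exp (- c x y / \<epsilon>) * exp (\<psi> y / \<epsilon>) = exp ((\<psi> y - c x y) / \<epsilon>)" for \<psi> :: "'y \<Rightarrow> real" and y
    by (simp add: exp_add[symmetric] diff_divide_distrib)
  have int: "integrable \<nu> (\<lambda>y. exp (\<psi>1 y / \<epsilon>))" "integrable \<nu> (\<lambda>y. exp (\<psi>2 y / \<epsilon>))"
    "integrable \<nu> (\<lambda>y. exp (- c x y / \<epsilon>) * exp (\<psi>1 y / \<epsilon>))"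
    "integrable \<nu> (\<lambda>y. exp (- c x y / \<epsilon>) * exp (\<psi>2 y / \<epsilon>))"
    using integrable_gibbs_kernel[OF \<nu> \<psi>1] integrable_gibbs_kernel[OF \<nu> \<psi>2] unfolding kernel
    by (auto intro!: integrable_exp_bounded[OF \<nu>] divide_right_mono bounded_borelD[OF \<psi>1] bounded_borelD[OF \<psi>2]
        simp: eps_pos less_imp_le)
  have "exp (lo2 / \<epsilon>) \<le> (\<integral>y. exp (\<psi>2 y / \<epsilon>) \<partial>\<nu>)"
    using integral_mono[OF _ int(2), of "\<lambda>_. exp (lo2 / \<epsilon>)"] bounded_borelD(2)[OF \<psi>2] eps_pos
    by (simp add: prob_space divide_right_mono)
  then have pos: "0 < (\<integral>y. exp (\<psi>2 y / \<epsilon>) \<partial>\<nu>)" by (rule less_le_trans[OF exp_gt_zero])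
  have uv: "exp (m / \<epsilon>) * exp (\<psi>2 y / \<epsilon>) \<le> exp (\<psi>1 y / \<epsilon>)"
    "exp (\<psi>1 y / \<epsilon>) \<le> exp (M / \<epsilon>) * exp (\<psi>2 y / \<epsilon>)" for y
    using m[of y] M[of y] eps_pos by (simp_all add: exp_add[symmetric] add_divide_distrib[symmetric] divide_right_mono)
  have theta: "exp (-1 / \<epsilon>) / exp (1 / \<epsilon>) = theta"
    by (simp add: theta_def exp_diff[symmetric] diff_divide_distrib[symmetric])
  note bounds = integral_ratio_convex_comb_bounds[OF int exp_ge_zero pos uv exp_gt_zero exp_cost_bounds,
      unfolded theta kernel, folded A_def partition_fn_def]
  show "exp (m / \<epsilon>) \<le> A"
    and "theta * A + (1 - theta) * exp (m / \<epsilon>) \<le> partition_fn \<nu> \<psi>1 x / partition_fn \<nu> \<psi>2 x"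
    and "partition_fn \<nu> \<psi>1 x / partition_fn \<nu> \<psi>2 x \<le> theta * A + (1 - theta) * exp (M / \<epsilon>)"
    by (fact bounds)+
qed

lemma ctransX_contraction:
  assumes \<nu>: "borel_prob \<nu>" and \<psi>1: "bounded_borel \<psi>1 lo1 hi1" and \<psi>2: "bounded_borel \<psi>2 lo2 hi2"
    and m: "\<And>y. m \<le> \<psi>1 y - \<psi>2 y" and M: "\<And>y. \<psi>1 y - \<psi>2 y \<le> M" and D: "M - m \<le> D"
  obtains m' M' where "\<And>x. m' \<le> ctransX c \<epsilon> \<nu> \<psi>1 x - ctransX c \<epsilon> \<nu> \<psi>2 x"
    and "\<And>x. ctransX c \<epsilon> \<nu> \<psi>1 x - ctransX c \<epsilon> \<nu> \<psi>2 x \<le> M'"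
    and "M' - m' \<le> contraction_rate D * (M - m)"
proof -
  define A where "A = (\<integral>y. exp (\<psi>1 y / \<epsilon>) \<partial>\<nu>) / (\<integral>y. exp (\<psi>2 y / \<epsilon>) \<partial>\<nu>)"
  define lower where "lower = theta * A + (1 - theta) * exp (m / \<epsilon>)"
  define upper where "upper = theta * A + (1 - theta) * exp (M / \<epsilon>)"
  note ratio = partition_fn_ratio_bounds[OF \<nu> \<psi>1 \<psi>2 m M, folded A_def lower_def upper_def]
  have mM: "m \<le> M" using m[of undefined] M[of undefined] by simp
  have lower: "0 < lower"
    using theta_bounds by (simp add: lower_def add_pos_nonneg less_le_trans[OF _ ratio(1)])
  have diff: "ctransX c \<epsilon> \<nu> \<psi>1 x - ctransX c \<epsilon> \<nu> \<psi>2 x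
      = - \<epsilon> * ln (partition_fn \<nu> \<psi>1 x / partition_fn \<nu> \<psi>2 x)" for x
    unfolding ctransX_eq_partition_fn using partition_fn_pos[OF \<nu> \<psi>1, of x] partition_fn_pos[OF \<nu> \<psi>2, of x]
    by (simp add: ln_div algebra_simps)
  show thesis
  proof
    fix x
    have "0 < partition_fn \<nu> \<psi>1 x / partition_fn \<nu> \<psi>2 x"
      using partition_fn_pos[OF \<nu> \<psi>1, of x] partition_fn_pos[OF \<nu> \<psi>2, of x] by simp
    then have "ln lower \<le> ln (partition_fn \<nu> \<psi>1 x / partition_fn \<nu> \<psi>2 x)"
        "ln (partition_fn \<nu> \<psi>1 x / partition_fn \<nu> \<psi>2 x) \<le> ln upper"
      using ratio(2,3)[of x] lower by simp_all
    then show "- \<epsilon> * ln upper \<le> ctransX c \<epsilon> \<nu> \<psi>1 x - ctransX c \<epsilon> \<nu> \<psi>2 x"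
        "ctransX c \<epsilon> \<nu> \<psi>1 x - ctransX c \<epsilon> \<nu> \<psi>2 x \<le> - \<epsilon> * ln lower"
      unfolding diff using eps_pos by simp_all
  next
    have "exp (M / \<epsilon>) \<le> exp (D / \<epsilon>) * exp (m / \<epsilon>)"
      using D eps_pos by (simp add: exp_add[symmetric] add_divide_distrib[symmetric] divide_right_mono)
    then have "ln upper - ln lower \<le> contraction_rate D * (ln (exp (M / \<epsilon>)) - ln (exp (m / \<epsilon>)))"
      unfolding upper_def lower_def contraction_rate_def
      by (intro ln_ratio_convex_comb_le theta_bounds ratio(1)) (use mM eps_pos in \<open>simp_all add: divide_right_mono\<close>)
    then show "- \<epsilon> * ln lower - - \<epsilon> * ln upper \<le> contraction_rate D * (M - m)"
      using eps_pos by (simp add: field_simps)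
  qed
qed

lemma ctransX_exp_integral_eq_1:
  assumes \<nu>: "borel_prob \<nu>" and \<psi>: "bounded_borel \<psi> lo hi" and \<phi>: "\<phi> x = ctransX c \<epsilon> \<nu> \<psi> x"
  shows "(\<integral>y. exp ((\<phi> x + \<psi> y - c x y) / \<epsilon>) \<partial>\<nu>) = 1"
proof -
  have "(\<integral>y. exp ((\<phi> x + \<psi> y - c x y) / \<epsilon>) \<partial>\<nu>) = (\<integral>y. exp (\<phi> x / \<epsilon>) * exp ((\<psi> y - c x y) / \<epsilon>) \<partial>\<nu>)"
    by (simp add: exp_add[symmetric] add_divide_distrib[symmetric] algebra_simps)
  also have "\<dots> = exp (\<phi> x / \<epsilon>) * partition_fn \<nu> \<psi> x" by (simp add: partition_fn_def)
  also have "exp (\<phi> x / \<epsilon>) = inverse (partition_fn \<nu> \<psi> x)"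
    unfolding \<phi> ctransX_eq_partition_fn using eps_pos partition_fn_pos[OF \<nu> \<psi>, of x] by (simp add: exp_minus)
  finally show ?thesis using partition_fn_pos[OF \<nu> \<psi>, of x] by simp
qed

definition gibbs_exponent :: "('x \<Rightarrow> real) \<Rightarrow> ('y \<Rightarrow> real) \<Rightarrow> 'x \<times> 'y \<Rightarrow> real" where
  "gibbs_exponent \<phi> \<psi> z = (\<phi> (fst z) + \<psi> (snd z) - c (fst z) (snd z)) / \<epsilon>"

lemma gibbs_exponent_measurable:
  assumes "bounded_borel \<phi> lo1 hi1" "bounded_borel \<psi> lo2 hi2"
  shows "gibbs_exponent \<phi> \<psi> \<in> borel_measurable (borel \<Otimes>\<^sub>M borel)"
proof -
  note [measurable] = bounded_borelD(1)[OF assms(1)] bounded_borelD(1)[OF assms(2)] cost_measurable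
  show ?thesis unfolding gibbs_exponent_def by measurable
qed

lemma gibbs_exponent_abs_le:
  assumes "bounded_borel \<phi> lo1 hi1" "bounded_borel \<psi> lo2 hi2"
  shows "\<bar>gibbs_exponent \<phi> \<psi> z\<bar> \<le> (\<bar>lo1\<bar> + \<bar>hi1\<bar> + \<bar>lo2\<bar> + \<bar>hi2\<bar> + 1) / \<epsilon>"
proof -
  have "\<bar>\<phi> (fst z) + \<psi> (snd z) - c (fst z) (snd z)\<bar> \<le> \<bar>lo1\<bar> + \<bar>hi1\<bar> + \<bar>lo2\<bar> + \<bar>hi2\<bar> + 1"
    using bounded_borel_abs_le[OF assms(1)] bounded_borel_abs_le[OF assms(2)] cost_bounded
    by (smt (verit))
  then show ?thesis unfolding gibbs_exponent_def using eps_pos by (simp add: abs_divide divide_right_mono)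
qed

lemma integrable_gibbs_exponent:
  assumes "prob_space P" "sets P = sets (borel \<Otimes>\<^sub>M borel)"
    and "bounded_borel \<phi> lo1 hi1" "bounded_borel \<psi> lo2 hi2"
  shows "integrable P (gibbs_exponent \<phi> \<psi>)" "integrable P (\<lambda>z. exp (gibbs_exponent \<phi> \<psi> z))"
proof -
  note bnd = gibbs_exponent_abs_le[OF assms(3,4)]
  have [measurable]: "gibbs_exponent \<phi> \<psi> \<in> borel_measurable (borel \<Otimes>\<^sub>M borel)"
    by (rule gibbs_exponent_measurable[OF assms(3,4)])
  show "integrable P (gibbs_exponent \<phi> \<psi>)"
    by (rule integrable_bounded_pair[OF assms(1,2) _ bnd]) simp
  show "integrable P (\<lambda>z. exp (gibbs_exponent \<phi> \<psi> z))"
  proof (rule integrable_bounded_pair[OF assms(1,2)])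
    show "\<bar>exp (gibbs_exponent \<phi> \<psi> z)\<bar> \<le> exp ((\<bar>lo1\<bar> + \<bar>hi1\<bar> + \<bar>lo2\<bar> + \<bar>hi2\<bar> + 1) / \<epsilon>)" for z
      using bnd[of z] by simp
  qed simp
qed

lemma integral_cost_add_gibbs_exponent:
  assumes \<mu>: "borel_prob \<mu>" and \<nu>: "borel_prob \<nu>" and \<pi>: "\<pi> \<in> couplings \<mu> \<nu>"
    and \<phi>: "bounded_borel \<phi> lo1 hi1" and \<psi>: "bounded_borel \<psi> lo2 hi2"
  shows "(\<integral>z. c (fst z) (snd z) \<partial>\<pi>) + \<epsilon> * (\<integral>z. gibbs_exponent \<phi> \<psi> z \<partial>\<pi>)
       = (\<integral>x. \<phi> x \<partial>\<mu>) + (\<integral>y. \<psi> y \<partial>\<nu>)"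
proof -
  note \<pi>' = couplings_borel[OF \<mu> \<nu> \<pi>]
  have "integrable \<pi> (\<lambda>z. c (fst z) (snd z))"
    by (rule integrable_bounded_pair[OF \<pi>' cost_measurable cost_bounded])
  moreover have "integrable \<pi> (gibbs_exponent \<phi> \<psi>)" by (rule integrable_gibbs_exponent[OF \<pi>' \<phi> \<psi>])
  ultimately have "(\<integral>z. c (fst z) (snd z) \<partial>\<pi>) + \<epsilon> * (\<integral>z. gibbs_exponent \<phi> \<psi> z \<partial>\<pi>)
      = (\<integral>z. c (fst z) (snd z) + \<epsilon> * gibbs_exponent \<phi> \<psi> z \<partial>\<pi>)"
    by simp
  also have "\<dots> = (\<integral>z. \<phi> (fst z) + \<psi> (snd z) \<partial>\<pi>)"
    using eps_pos by (simp add: gibbs_exponent_def)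
  also have "\<dots> = (\<integral>x. \<phi> x \<partial>\<mu>) + (\<integral>y. \<psi> y \<partial>\<nu>)"
    using \<pi> integrable_bounded_borel[OF \<mu> \<phi>] integrable_bounded_borel[OF \<nu> \<psi>]
    by (rule integral_couplings_split)
  finally show ?thesis .
qed

lemma dual_le_OT:
  assumes \<mu>: "borel_prob \<mu>" and \<nu>: "borel_prob \<nu>"
    and \<phi>: "bounded_borel \<phi> lo1 hi1" and \<psi>: "bounded_borel \<psi> lo2 hi2"
    and exp_le_1: "(\<integral>z. exp (gibbs_exponent \<phi> \<psi> z) \<partial>(\<mu> \<Otimes>\<^sub>M \<nu>)) \<le> 1"
  shows "ereal ((\<integral>x. \<phi> x \<partial>\<mu>) + (\<integral>y. \<psi> y \<partial>\<nu>)) \<le> OT c \<epsilon> \<mu> \<nu>"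
  unfolding OT_def
proof (rule INF_greatest)
  fix \<pi> assume \<pi>: "\<pi> \<in> couplings \<mu> \<nu>"
  note \<pi>' = couplings_borel[OF \<mu> \<nu> \<pi>]
  have sets: "sets \<pi> = sets (\<mu> \<Otimes>\<^sub>M \<nu>)" and P: "prob_space (\<mu> \<Otimes>\<^sub>M \<nu>)"
    using \<pi>'(2) sets_pair_borel_prob[OF \<mu> \<nu>] prob_space_pair_borel_prob[OF \<mu> \<nu>] by simp_all
  have "ereal (\<integral>z. gibbs_exponent \<phi> \<psi> z \<partial>\<pi>) \<le> KL \<pi> (\<mu> \<Otimes>\<^sub>M \<nu>)"
  proof (rule integral_le_KL[OF \<pi>'(1) prob_space_imp_sigma_finite[OF P] sets _ _ _ exp_le_1])
    show "gibbs_exponent \<phi> \<psi> \<in> borel_measurable (\<mu> \<Otimes>\<^sub>M \<nu>)"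
      using gibbs_exponent_measurable[OF \<phi> \<psi>] by (simp add: measurable_cong_sets[OF sets_pair_borel_prob[OF \<mu> \<nu>] refl])
    show "integrable \<pi> (gibbs_exponent \<phi> \<psi>)" by (rule integrable_gibbs_exponent[OF \<pi>' \<phi> \<psi>])
    show "integrable (\<mu> \<Otimes>\<^sub>M \<nu>) (\<lambda>z. exp (gibbs_exponent \<phi> \<psi> z))"
      by (rule integrable_gibbs_exponent[OF P sets_pair_borel_prob[OF \<mu> \<nu>] \<phi> \<psi>])
  qed
  then have "ereal \<epsilon> * ereal (\<integral>z. gibbs_exponent \<phi> \<psi> z \<partial>\<pi>) \<le> ereal \<epsilon> * KL \<pi> (\<mu> \<Otimes>\<^sub>M \<nu>)"
    using eps_pos by (intro ereal_mult_left_mono) simp_all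
  then have "ereal (\<integral>z. c (fst z) (snd z) \<partial>\<pi>) + ereal \<epsilon> * ereal (\<integral>z. gibbs_exponent \<phi> \<psi> z \<partial>\<pi>)
      \<le> ereal (\<integral>z. c (fst z) (snd z) \<partial>\<pi>) + ereal \<epsilon> * KL \<pi> (\<mu> \<Otimes>\<^sub>M \<nu>)"
    by (rule add_left_mono)
  then show "ereal ((\<integral>x. \<phi> x \<partial>\<mu>) + (\<integral>y. \<psi> y \<partial>\<nu>))
      \<le> ereal (\<integral>z. c (fst z) (snd z) \<partial>\<pi>) + ereal \<epsilon> * KL \<pi> (\<mu> \<Otimes>\<^sub>M \<nu>)"
    unfolding integral_cost_add_gibbs_exponent[OF \<mu> \<nu> \<pi> \<phi> \<psi>, symmetric] by simp
qed

lemma nn_integral_exp_gibbs_exponent_snd: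
  assumes \<nu>: "borel_prob \<nu>" and \<psi>: "bounded_borel \<psi> lo hi" and \<phi>: "\<phi> x = ctransX c \<epsilon> \<nu> \<psi> x"
  shows "(\<integral>\<^sup>+y. ennreal (exp (gibbs_exponent \<phi> \<psi> (x, y))) \<partial>\<nu>) = 1"
proof -
  have "integrable \<nu> (\<lambda>y. exp (\<phi> x / \<epsilon>) * exp ((\<psi> y - c x y) / \<epsilon>))"
    using integrable_gibbs_kernel[OF \<nu> \<psi>] by simp
  then have "integrable \<nu> (\<lambda>y. exp (gibbs_exponent \<phi> \<psi> (x, y)))"
    by (simp add: gibbs_exponent_def exp_add[symmetric] add_divide_distrib[symmetric] algebra_simps)
  then show ?thesis
    using ctransX_exp_integral_eq_1[where \<phi> = \<phi> and x = x, OF \<nu> \<psi> \<phi>]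
    by (simp add: nn_integral_eq_integral gibbs_exponent_def)
qed

lemma integral_exp_gibbs_exponent_eq_1_fst:
  assumes \<mu>: "borel_prob \<mu>" and \<nu>: "borel_prob \<nu>"
    and \<phi>: "bounded_borel \<phi> lo1 hi1" and \<psi>: "bounded_borel \<psi> lo2 hi2"
    and eq: "\<And>x. \<phi> x = ctransX c \<epsilon> \<nu> \<psi> x"
  shows "(\<integral>z. exp (gibbs_exponent \<phi> \<psi> z) \<partial>(\<mu> \<Otimes>\<^sub>M \<nu>)) = 1"
proof -
  interpret M: prob_space \<mu> using \<mu> by (simp add: borel_prob_def)
  interpret N: prob_space \<nu> using \<nu> by (simp add: borel_prob_def)
  interpret pair_prob_space \<mu> \<nu> ..
  have "integrable (\<mu> \<Otimes>\<^sub>M \<nu>) (\<lambda>z. exp (gibbs_exponent \<phi> \<psi> z))"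
    by (rule integrable_gibbs_exponent[OF prob_space_pair_borel_prob[OF \<mu> \<nu>] sets_pair_borel_prob[OF \<mu> \<nu>] \<phi> \<psi>])
  then have "(\<integral>z. exp (gibbs_exponent \<phi> \<psi> z) \<partial>(\<mu> \<Otimes>\<^sub>M \<nu>)) = (\<integral>x. \<integral>y. exp (gibbs_exponent \<phi> \<psi> (x, y)) \<partial>\<nu> \<partial>\<mu>)"
    by (rule integral_fst'[symmetric])
  also have "\<dots> = 1"
  proof -
    have "(\<integral>y. exp ((\<phi> x + \<psi> y - c x y) / \<epsilon>) \<partial>\<nu>) = 1" for x
      by (rule ctransX_exp_integral_eq_1[OF \<nu> \<psi> eq])
    then show ?thesis by (simp add: gibbs_exponent_def M.prob_space)
  qed
  finally show ?thesis .
qed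

context
begin

interpretation swapped: bounded_cost "\<lambda>y x. c x y" \<epsilon> by (rule bounded_cost_swap)

lemma nn_integral_exp_gibbs_exponent_fst:
  assumes \<mu>: "borel_prob \<mu>" and \<phi>: "bounded_borel \<phi> lo hi" and \<psi>: "\<psi> y = ctransY c \<epsilon> \<mu> \<phi> y"
  shows "(\<integral>\<^sup>+x. ennreal (exp (gibbs_exponent \<phi> \<psi> (x, y))) \<partial>\<mu>) = 1"
  using swapped.nn_integral_exp_gibbs_exponent_snd[OF \<mu> \<phi>, of \<psi> y] \<psi>
  by (simp add: ctransY_eq_ctransX_swap gibbs_exponent_def swapped.gibbs_exponent_def add.commute)

lemma integral_exp_gibbs_exponent_eq_1_snd:
  assumes \<mu>: "borel_prob \<mu>" and \<nu>: "borel_prob \<nu>"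
    and \<phi>: "bounded_borel \<phi> lo1 hi1" and \<psi>: "bounded_borel \<psi> lo2 hi2"
    and eq: "\<And>y. \<psi> y = ctransY c \<epsilon> \<mu> \<phi> y"
  shows "(\<integral>z. exp (gibbs_exponent \<phi> \<psi> z) \<partial>(\<mu> \<Otimes>\<^sub>M \<nu>)) = 1"
proof -
  interpret M: prob_space \<mu> using \<mu> by (simp add: borel_prob_def)
  interpret N: prob_space \<nu> using \<nu> by (simp add: borel_prob_def)
  interpret pair_prob_space \<mu> \<nu> ..
  have "integrable (\<mu> \<Otimes>\<^sub>M \<nu>) (\<lambda>z. exp (gibbs_exponent \<phi> \<psi> z))"
    by (rule integrable_gibbs_exponent[OF prob_space_pair_borel_prob[OF \<mu> \<nu>] sets_pair_borel_prob[OF \<mu> \<nu>] \<phi> \<psi>])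
  then have "(\<integral>z. exp (gibbs_exponent \<phi> \<psi> z) \<partial>(\<mu> \<Otimes>\<^sub>M \<nu>)) = (\<integral>y. \<integral>x. exp (gibbs_exponent \<phi> \<psi> (x, y)) \<partial>\<mu> \<partial>\<nu>)"
    using integral_snd[of "\<lambda>x y. exp (gibbs_exponent \<phi> \<psi> (x, y))"] by (simp add: case_prod_unfold)
  also have "\<dots> = 1"
  proof -
    have "(\<integral>x. exp ((\<phi> x + \<psi> y - c x y) / \<epsilon>) \<partial>\<mu>) = 1" for y
      using swapped.ctransX_exp_integral_eq_1[OF \<mu> \<phi>, of \<psi> y] eq[of y]
      by (simp add: ctransY_eq_ctransX_swap add.commute)
    then show ?thesis by (simp add: gibbs_exponent_def N.prob_space)
  qed
  finally show ?thesis .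
qed

end

lemma OT_le_dual:
  assumes \<mu>: "borel_prob \<mu>" and \<nu>: "borel_prob \<nu>"
    and \<phi>: "bounded_borel \<phi> lo1 hi1" and \<psi>: "bounded_borel \<psi> lo2 hi2"
    and \<phi>_eq: "\<And>x. \<phi> x = ctransX c \<epsilon> \<nu> \<psi> x" and \<psi>_eq: "\<And>y. \<psi> y = ctransY c \<epsilon> \<mu> \<phi> y"
  shows "OT c \<epsilon> \<mu> \<nu> \<le> ereal ((\<integral>x. \<phi> x \<partial>\<mu>) + (\<integral>y. \<psi> y \<partial>\<nu>))"
proof -
  \<comment> \<open>The Gibbs coupling \<open>exp ((\<phi> \<oplus> \<psi> - c) / \<epsilon>) \<cdot> (\<mu> \<otimes> \<nu>)\<close> attains the dual value.\<close>
  define \<pi> where "\<pi> = density (\<mu> \<Otimes>\<^sub>M \<nu>) (\<lambda>z. ennreal (exp (gibbs_exponent \<phi> \<psi> z)))"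
  have meas: "gibbs_exponent \<phi> \<psi> \<in> borel_measurable (\<mu> \<Otimes>\<^sub>M \<nu>)"
    using gibbs_exponent_measurable[OF \<phi> \<psi>] by (simp add: measurable_cong_sets[OF sets_pair_borel_prob[OF \<mu> \<nu>] refl])
  have \<pi>: "\<pi> \<in> couplings \<mu> \<nu>"
    unfolding \<pi>_def using \<mu> \<nu> meas
    by (intro density_pair_in_couplings nn_integral_exp_gibbs_exponent_snd[OF \<nu> \<psi> \<phi>_eq]
        nn_integral_exp_gibbs_exponent_fst[OF \<mu> \<phi> \<psi>_eq]) (auto simp: borel_prob_def)
  have "KL \<pi> (\<mu> \<Otimes>\<^sub>M \<nu>) = ereal (\<integral>z. gibbs_exponent \<phi> \<psi> z \<partial>\<pi>)"
    unfolding \<pi>_def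
    by (rule KL_density_exp[OF prob_space_imp_sigma_finite[OF prob_space_pair_borel_prob[OF \<mu> \<nu>]] meas])
       (rule integrable_gibbs_exponent[OF couplings_borel[OF \<mu> \<nu> \<pi>] \<phi> \<psi>, unfolded \<pi>_def])
  then have "ereal (\<integral>z. c (fst z) (snd z) \<partial>\<pi>) + ereal \<epsilon> * KL \<pi> (\<mu> \<Otimes>\<^sub>M \<nu>)
      = ereal ((\<integral>x. \<phi> x \<partial>\<mu>) + (\<integral>y. \<psi> y \<partial>\<nu>))"
    unfolding integral_cost_add_gibbs_exponent[OF \<mu> \<nu> \<pi> \<phi> \<psi>, symmetric] by simp
  moreover have "OT c \<epsilon> \<mu> \<nu> \<le> ereal (\<integral>z. c (fst z) (snd z) \<partial>\<pi>) + ereal \<epsilon> * KL \<pi> (\<mu> \<Otimes>\<^sub>M \<nu>)"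
    unfolding OT_def by (rule INF_lower[OF \<pi>])
  ultimately show ?thesis by simp
qed

lemma OT_eq_dual:
  assumes \<mu>: "borel_prob \<mu>" and \<nu>: "borel_prob \<nu>"
    and \<phi>: "bounded_borel \<phi> lo1 hi1" and \<psi>: "bounded_borel \<psi> lo2 hi2"
    and \<phi>_eq: "\<And>x. \<phi> x = ctransX c \<epsilon> \<nu> \<psi> x" and \<psi>_eq: "\<And>y. \<psi> y = ctransY c \<epsilon> \<mu> \<phi> y"
  shows "OT c \<epsilon> \<mu> \<nu> = ereal ((\<integral>x. \<phi> x \<partial>\<mu>) + (\<integral>y. \<psi> y \<partial>\<nu>))"
  using OT_le_dual[OF assms] dual_le_OT[OF \<mu> \<nu> \<phi> \<psi>]
    integral_exp_gibbs_exponent_eq_1_fst[OF \<mu> \<nu> \<phi> \<psi> \<phi>_eq]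
  by simp

definition sinkhorn_map :: "'x measure \<Rightarrow> 'y measure \<Rightarrow> ('y \<Rightarrow> real) \<Rightarrow> 'y \<Rightarrow> real" where
  "sinkhorn_map \<mu> \<nu> \<psi> = ctransY c \<epsilon> \<mu> (ctransX c \<epsilon> \<nu> \<psi>)"

context
  fixes \<mu> :: "'x measure" and \<nu> :: "'y measure"
  assumes \<mu>: "borel_prob \<mu>" and \<nu>: "borel_prob \<nu>"
begin

interpretation swapped: bounded_cost "\<lambda>y x. c x y" \<epsilon> by (rule bounded_cost_swap)

lemma bounded_borel_sinkhorn_map:
  "bounded_borel \<psi> lo hi \<Longrightarrow> bounded_borel (sinkhorn_map \<mu> \<nu> \<psi>) (lo - 2) (hi + 2)"
  using swapped.bounded_borel_ctransX[OF \<mu> bounded_borel_ctransX[OF \<nu>]]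
  by (simp add: sinkhorn_map_def ctransY_eq_ctransX_swap add.commute)

lemma sinkhorn_map_oscillation:
  "bounded_borel \<psi> lo hi \<Longrightarrow> sinkhorn_map \<mu> \<nu> \<psi> y - sinkhorn_map \<mu> \<nu> \<psi> y' \<le> 2"
  unfolding sinkhorn_map_def ctransY_eq_ctransX_swap
  by (rule swapped.ctransX_oscillation[OF \<mu> bounded_borel_ctransX[OF \<nu>]])

lemma sinkhorn_map_nonexpansive:
  assumes \<psi>1: "bounded_borel \<psi>1 lo1 hi1" and \<psi>2: "bounded_borel \<psi>2 lo2 hi2"
    and d: "\<And>y. \<bar>\<psi>1 y - \<psi>2 y\<bar> \<le> d"
  shows "\<bar>sinkhorn_map \<mu> \<nu> \<psi>1 y - sinkhorn_map \<mu> \<nu> \<psi>2 y\<bar> \<le> d"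
  unfolding sinkhorn_map_def ctransY_eq_ctransX_swap
  by (rule swapped.ctransX_nonexpansive[OF \<mu> bounded_borel_ctransX[OF \<nu> \<psi>1] bounded_borel_ctransX[OF \<nu> \<psi>2]])
     (rule ctransX_nonexpansive[OF \<nu> \<psi>1 \<psi>2 d])

lemma sinkhorn_map_contraction:
  assumes \<psi>1: "bounded_borel \<psi>1 lo1 hi1" and \<psi>2: "bounded_borel \<psi>2 lo2 hi2"
    and m: "\<And>y. m \<le> \<psi>1 y - \<psi>2 y" and M: "\<And>y. \<psi>1 y - \<psi>2 y \<le> M" and D: "M - m \<le> D"
  obtains m' M' where "\<And>y. m' \<le> sinkhorn_map \<mu> \<nu> \<psi>1 y - sinkhorn_map \<mu> \<nu> \<psi>2 y"
    and "\<And>y. sinkhorn_map \<mu> \<nu> \<psi>1 y - sinkhorn_map \<mu> \<nu> \<psi>2 y \<le> M'"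
    and "M' - m' \<le> contraction_rate D * (M - m)"
proof -
  have \<kappa>: "0 \<le> contraction_rate D" "contraction_rate D \<le> 1"
    using contraction_rate_bounds[of D] by simp_all
  have mM: "0 \<le> M - m" using m[of undefined] M[of undefined] by simp
  obtain m1 M1 where m1: "\<And>x. m1 \<le> ctransX c \<epsilon> \<nu> \<psi>1 x - ctransX c \<epsilon> \<nu> \<psi>2 x"
      "\<And>x. ctransX c \<epsilon> \<nu> \<psi>1 x - ctransX c \<epsilon> \<nu> \<psi>2 x \<le> M1"
    and w1: "M1 - m1 \<le> contraction_rate D * (M - m)"
    using ctransX_contraction[OF \<nu> \<psi>1 \<psi>2 m M D] by blast
  have w1': "contraction_rate D * (M - m) \<le> M - m" using \<kappa> mM by (simp add: mult_left_le_one_le)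
  have D1: "M1 - m1 \<le> D" using w1 w1' D by linarith
  obtain m2 M2 where "\<And>y. m2 \<le> sinkhorn_map \<mu> \<nu> \<psi>1 y - sinkhorn_map \<mu> \<nu> \<psi>2 y"
      "\<And>y. sinkhorn_map \<mu> \<nu> \<psi>1 y - sinkhorn_map \<mu> \<nu> \<psi>2 y \<le> M2"
    and w2: "M2 - m2 \<le> contraction_rate D * (M1 - m1)"
    using swapped.ctransX_contraction[OF \<mu> bounded_borel_ctransX[OF \<nu> \<psi>1] bounded_borel_ctransX[OF \<nu> \<psi>2] m1 D1]
    unfolding sinkhorn_map_def ctransY_eq_ctransX_swap swapped.contraction_rate_def swapped.theta_def
      contraction_rate_def theta_def
    by blast
  moreover have "contraction_rate D * (M1 - m1) \<le> contraction_rate D * (M - m)"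
    using mult_left_mono[OF w1 \<kappa>(1)] mult_left_le_one_le[OF _ \<kappa>] mM \<kappa>(1)
    by (smt (verit) mult_nonneg_nonneg)
  ultimately show thesis using that by (meson order_trans)
qed

lemma sinkhorn_map_shift_eq_0:
  assumes \<zeta>: "bounded_borel \<zeta> lo hi" and shift: "\<And>y. sinkhorn_map \<mu> \<nu> \<zeta> y = \<zeta> y + a"
  shows "a = 0"
proof -
  \<comment> \<open>Mass conservation: both Gibbs integrals below equal 1, yet they differ by the factor \<open>exp (a / \<epsilon>)\<close>.\<close>
  define \<phi> where "\<phi> = ctransX c \<epsilon> \<nu> \<zeta>"
  have \<phi>: "bounded_borel \<phi> (- hi - 1) (1 - lo)" unfolding \<phi>_def by (rule bounded_borel_ctransX[OF \<nu> \<zeta>])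
  have "(\<lambda>y. \<zeta> y + a) y = ctransY c \<epsilon> \<mu> \<phi> y" for y using shift[of y] by (simp add: sinkhorn_map_def \<phi>_def)
  then have "(\<integral>z. exp (gibbs_exponent \<phi> (\<lambda>y. \<zeta> y + a) z) \<partial>(\<mu> \<Otimes>\<^sub>M \<nu>)) = 1"
    by (rule integral_exp_gibbs_exponent_eq_1_snd[OF \<mu> \<nu> \<phi> bounded_borel_add_const[OF \<zeta>]])
  moreover have "(\<integral>z. exp (gibbs_exponent \<phi> \<zeta> z) \<partial>(\<mu> \<Otimes>\<^sub>M \<nu>)) = 1"
    by (rule integral_exp_gibbs_exponent_eq_1_fst[OF \<mu> \<nu> \<phi> \<zeta>]) (simp add: \<phi>_def)
  moreover have "exp (gibbs_exponent \<phi> (\<lambda>y. \<zeta> y + a) z) = exp (a / \<epsilon>) * exp (gibbs_exponent \<phi> \<zeta> z)" for z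
    by (simp add: gibbs_exponent_def exp_add[symmetric] add_divide_distrib[symmetric] algebra_simps)
  ultimately have "exp (a / \<epsilon>) = 1" by simp
  then show "a = 0" using eps_pos by simp
qed

lemma bounded_borel_sinkhorn_map_normalized:
  assumes "bounded_borel \<psi> lo hi"
  shows "bounded_borel (\<lambda>y. sinkhorn_map \<mu> \<nu> \<psi> y - sinkhorn_map \<mu> \<nu> \<psi> y0) (-2) 2"
proof -
  note [measurable] = bounded_borelD(1)[OF bounded_borel_sinkhorn_map[OF assms]]
  have "(\<lambda>y. sinkhorn_map \<mu> \<nu> \<psi> y - sinkhorn_map \<mu> \<nu> \<psi> y0) \<in> borel_measurable borel" by measurable
  moreover have "-2 \<le> sinkhorn_map \<mu> \<nu> \<psi> y - sinkhorn_map \<mu> \<nu> \<psi> y0"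
      "sinkhorn_map \<mu> \<nu> \<psi> y - sinkhorn_map \<mu> \<nu> \<psi> y0 \<le> 2" for y
    using sinkhorn_map_oscillation[OF assms, of y y0] sinkhorn_map_oscillation[OF assms, of y0 y]
    by simp_all
  ultimately show ?thesis by (simp add: bounded_borel_def)
qed

lemma sinkhorn_normalized_iterates:
  fixes y0 :: 'y
  defines "G \<equiv> \<lambda>\<psi> y. sinkhorn_map \<mu> \<nu> \<psi> y - sinkhorn_map \<mu> \<nu> \<psi> y0"
  shows "bounded_borel ((G ^^ n) (\<lambda>_. 0)) (-2) 2"
    and "\<bar>(G ^^ Suc n) (\<lambda>_. 0) y - (G ^^ n) (\<lambda>_. 0) y\<bar> \<le> 4 * contraction_rate 4 ^ n"
proof -
  define \<zeta> where "\<zeta> n = (G ^^ n) (\<lambda>_. 0)" for n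
  define \<kappa> where "\<kappa> = contraction_rate 4"
  have \<kappa>: "0 \<le> \<kappa>" "\<kappa> \<le> 1" using contraction_rate_bounds[of 4] by (simp_all add: \<kappa>_def)
  have \<zeta>_Suc: "\<zeta> (Suc n) = G (\<zeta> n)" for n by (simp add: \<zeta>_def)
  have bounded: "bounded_borel (\<zeta> n) (-2) 2" for n
  proof (induction n)
    case 0
    show ?case by (simp add: \<zeta>_def bounded_borel_def)
  next
    case (Suc n)
    show ?case unfolding \<zeta>_Suc G_def by (rule bounded_borel_sinkhorn_map_normalized[OF Suc.IH])
  qed
  then show "bounded_borel ((G ^^ n) (\<lambda>_. 0)) (-2) 2" by (simp add: \<zeta>_def)
  have \<zeta>_y0: "\<zeta> n y0 = 0" for n by (cases n) (simp_all add: \<zeta>_def G_def)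
  have "\<exists>m M. (\<forall>y. m \<le> \<zeta> (Suc n) y - \<zeta> n y \<and> \<zeta> (Suc n) y - \<zeta> n y \<le> M) \<and> M - m \<le> 4 * \<kappa>^n" for n
  proof (induction n)
    case 0
    show ?case using bounded[of 1] by (intro exI[of _ "-2"] exI[of _ 2]) (simp add: \<zeta>_def bounded_borel_def)
  next
    case (Suc n)
    then obtain m M where m: "\<And>y. m \<le> \<zeta> (Suc n) y - \<zeta> n y" and M: "\<And>y. \<zeta> (Suc n) y - \<zeta> n y \<le> M"
      and w: "M - m \<le> 4 * \<kappa>^n" by blast
    have "M - m \<le> 4" using w \<kappa> power_le_one[of \<kappa> n] by linarith
    then obtain m' M' where "\<And>y. m' \<le> sinkhorn_map \<mu> \<nu> (\<zeta> (Suc n)) y - sinkhorn_map \<mu> \<nu> (\<zeta> n) y"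
        "\<And>y. sinkhorn_map \<mu> \<nu> (\<zeta> (Suc n)) y - sinkhorn_map \<mu> \<nu> (\<zeta> n) y \<le> M'"
      and w': "M' - m' \<le> \<kappa> * (M - m)"
      using sinkhorn_map_contraction[OF bounded bounded m M] unfolding \<kappa>_def by blast
    moreover define d where "d = sinkhorn_map \<mu> \<nu> (\<zeta> (Suc n)) y0 - sinkhorn_map \<mu> \<nu> (\<zeta> n) y0"
    ultimately have "\<forall>y. m' - d \<le> \<zeta> (Suc (Suc n)) y - \<zeta> (Suc n) y \<and> \<zeta> (Suc (Suc n)) y - \<zeta> (Suc n) y \<le> M' - d"
      by (simp add: \<zeta>_Suc[of "Suc n"] \<zeta>_Suc[of n] G_def)
    moreover have "(M' - d) - (m' - d) \<le> 4 * \<kappa>^Suc n"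
      using w' mult_left_mono[OF w \<kappa>(1)] by simp
    ultimately show ?case by blast
  qed
  then obtain m M where "m \<le> \<zeta> (Suc n) y - \<zeta> n y" "\<zeta> (Suc n) y - \<zeta> n y \<le> M"
    "m \<le> 0" "0 \<le> M" "M - m \<le> 4 * \<kappa>^n"
    using \<zeta>_y0 by (metis diff_self)
  then show "\<bar>(G ^^ Suc n) (\<lambda>_. 0) y - (G ^^ n) (\<lambda>_. 0) y\<bar> \<le> 4 * contraction_rate 4 ^ n"
    by (simp add: \<zeta>_def \<kappa>_def abs_le_iff)
qed

lemma sinkhorn_fixpoint_exists:
  obtains \<zeta> where "bounded_borel \<zeta> (-2) 2" "\<And>y. sinkhorn_map \<mu> \<nu> \<zeta> y = \<zeta> y"
proof -
  define y0 :: 'y where "y0 = undefined"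
  define G where "G = (\<lambda>\<psi> y. sinkhorn_map \<mu> \<nu> \<psi> y - sinkhorn_map \<mu> \<nu> \<psi> y0)"
  define \<zeta> where "\<zeta> n = (G ^^ n) (\<lambda>_. 0)" for n
  define \<kappa> where "\<kappa> = contraction_rate 4"
  define e where "e n = 4 * \<kappa>^n / (1 - \<kappa>)" for n
  have \<kappa>: "0 \<le> \<kappa>" "\<kappa> < 1" using contraction_rate_bounds[of 4] by (simp_all add: \<kappa>_def)
  have bounded_iterates: "bounded_borel (\<zeta> n) (-2) 2" for n
    using sinkhorn_normalized_iterates(1)[of n y0] by (simp add: \<zeta>_def G_def)
  have increments: "\<bar>\<zeta> (Suc n) y - \<zeta> n y\<bar> \<le> 4 * \<kappa>^n" for n y
    using sinkhorn_normalized_iterates(2)[of n y0 y] by (simp add: \<zeta>_def G_def \<kappa>_def)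
  have "\<exists>L. (\<lambda>n. \<zeta> n y) \<longlonglongrightarrow> L \<and> (\<forall>n. \<bar>\<zeta> n y - L\<bar> \<le> e n)" for y
  proof -
    have "\<bar>\<zeta> (Suc n) y - \<zeta> n y\<bar> \<le> 4 * \<kappa>^n" for n by (rule increments)
    then show ?thesis
      using geometric_increments_limit[OF \<kappa>, of "\<lambda>n. \<zeta> n y" 4] unfolding e_def by blast
  qed
  then have "\<exists>Z. \<forall>y. (\<lambda>n. \<zeta> n y) \<longlonglongrightarrow> Z y \<and> (\<forall>n. \<bar>\<zeta> n y - Z y\<bar> \<le> e n)"
    by (rule choice[OF allI])
  then obtain \<zeta>\<^sub>l\<^sub>i\<^sub>m where lim: "\<And>y. (\<lambda>n. \<zeta> n y) \<longlonglongrightarrow> \<zeta>\<^sub>l\<^sub>i\<^sub>m y"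
    and dist: "\<And>n y. \<bar>\<zeta> n y - \<zeta>\<^sub>l\<^sub>i\<^sub>m y\<bar> \<le> e n"
    by blast
  have bounded: "bounded_borel \<zeta>\<^sub>l\<^sub>i\<^sub>m (-2) 2"
    unfolding bounded_borel_def
  proof (intro conjI allI)
    show "\<zeta>\<^sub>l\<^sub>i\<^sub>m \<in> borel_measurable borel"
      by (rule borel_measurable_LIMSEQ_real[OF lim]) (use bounded_iterates in \<open>simp add: bounded_borel_def\<close>)
    show "-2 \<le> \<zeta>\<^sub>l\<^sub>i\<^sub>m y" "\<zeta>\<^sub>l\<^sub>i\<^sub>m y \<le> 2" for y
      using LIMSEQ_le_const[OF lim] LIMSEQ_le_const2[OF lim] bounded_iterates by (auto simp: bounded_borel_def)
  qed
  have G_fixed: "G \<zeta>\<^sub>l\<^sub>i\<^sub>m y - \<zeta>\<^sub>l\<^sub>i\<^sub>m y = 0" for y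
  proof (rule eq_0_if_abs_le_geometric[OF \<kappa>, where C = "12 / (1 - \<kappa>)"])
    fix n
    have F: "\<bar>sinkhorn_map \<mu> \<nu> \<zeta>\<^sub>l\<^sub>i\<^sub>m z - sinkhorn_map \<mu> \<nu> (\<zeta> n) z\<bar> \<le> e n" for z
      by (rule sinkhorn_map_nonexpansive[OF bounded bounded_iterates]) (use dist in \<open>simp add: abs_minus_commute\<close>)
    have "e (Suc n) \<le> e n" unfolding e_def using \<kappa> by (simp add: divide_right_mono mult_left_le_one_le)
    then have "\<bar>G (\<zeta> n) y - \<zeta>\<^sub>l\<^sub>i\<^sub>m y\<bar> \<le> e n" using dist[of "Suc n" y] by (simp add: \<zeta>_def)
    then have "\<bar>G \<zeta>\<^sub>l\<^sub>i\<^sub>m y - \<zeta>\<^sub>l\<^sub>i\<^sub>m y\<bar> \<le> 3 * e n" using F[of y] F[of y0] by (simp add: G_def abs_le_iff)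
    then show "\<bar>G \<zeta>\<^sub>l\<^sub>i\<^sub>m y - \<zeta>\<^sub>l\<^sub>i\<^sub>m y\<bar> \<le> 12 / (1 - \<kappa>) * \<kappa>^n" by (simp add: e_def)
  qed
  have shift: "sinkhorn_map \<mu> \<nu> \<zeta>\<^sub>l\<^sub>i\<^sub>m y = \<zeta>\<^sub>l\<^sub>i\<^sub>m y + sinkhorn_map \<mu> \<nu> \<zeta>\<^sub>l\<^sub>i\<^sub>m y0" for y
    using G_fixed[of y] unfolding G_def by linarith
  have "sinkhorn_map \<mu> \<nu> \<zeta>\<^sub>l\<^sub>i\<^sub>m y0 = 0" by (rule sinkhorn_map_shift_eq_0[OF bounded shift])
  then have "sinkhorn_map \<mu> \<nu> \<zeta>\<^sub>l\<^sub>i\<^sub>m y = \<zeta>\<^sub>l\<^sub>i\<^sub>m y" for y using shift[of y] by linarith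
  with bounded show thesis by (rule that)
qed

lemma sinkhorn_potentials_exist:
  obtains \<phi> \<psi> where "bounded_borel \<phi> (-3/2) (3/2)" "bounded_borel \<psi> (-3/2) (3/2)"
    "\<And>x. \<phi> x = ctransX c \<epsilon> \<nu> \<psi> x" "\<And>y. \<psi> y = ctransY c \<epsilon> \<mu> \<phi> y"
proof -
  obtain \<zeta> where \<zeta>: "bounded_borel \<zeta> (-2) 2" and fixpoint: "\<And>y. sinkhorn_map \<mu> \<nu> \<zeta> y = \<zeta> y"
    using sinkhorn_fixpoint_exists by blast
  define \<phi>\<^sub>0 where "\<phi>\<^sub>0 = ctransX c \<epsilon> \<nu> \<zeta>"
  have \<phi>\<^sub>0: "bounded_borel \<phi>\<^sub>0 (-3) 3" using bounded_borel_ctransX[OF \<nu> \<zeta>] by (simp add: \<phi>\<^sub>0_def)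
  have osc_\<zeta>: "\<zeta> y - \<zeta> y' \<le> 2" for y y'
    using sinkhorn_map_oscillation[OF \<zeta>, of y y'] by (simp only: fixpoint)
  have osc_\<phi>\<^sub>0: "\<phi>\<^sub>0 x - \<phi>\<^sub>0 x' \<le> 2 * (3/2)" for x x'
    using ctransX_oscillation[OF \<nu> \<zeta>, of x x'] by (simp add: \<phi>\<^sub>0_def)
  have sum_\<phi>\<^sub>0_\<zeta>: "\<bar>\<phi>\<^sub>0 x + \<zeta> y\<bar> \<le> 2 * (3/2)" for x y
  proof -
    have "\<zeta> y - 2 \<le> \<zeta> y' \<and> \<zeta> y' \<le> \<zeta> y + 2" for y'
      using osc_\<zeta>[of y y'] osc_\<zeta>[of y' y] by linarith
    then have "bounded_borel \<zeta> (\<zeta> y - 2) (\<zeta> y + 2)" using \<zeta> by (simp add: bounded_borel_def)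
    from ctransX_bounds[OF \<nu> this, of x] show ?thesis by (simp add: \<phi>\<^sub>0_def abs_le_iff)
  qed
  have osc_\<zeta>': "\<zeta> y - \<zeta> y' \<le> 2 * (3/2)" for y y' using osc_\<zeta>[of y y'] by simp
  from common_shift_exists[of \<phi>\<^sub>0 "3/2" \<zeta>, OF osc_\<phi>\<^sub>0 osc_\<zeta>' sum_\<phi>\<^sub>0_\<zeta>]
  obtain t where t: "\<forall>x. \<bar>\<phi>\<^sub>0 x - t\<bar> \<le> 3/2" "\<forall>y. \<bar>\<zeta> y + t\<bar> \<le> 3/2" by blast
  note [measurable] = bounded_borelD(1)[OF \<phi>\<^sub>0] bounded_borelD(1)[OF \<zeta>]
  show thesis
  proof
    have "-3/2 \<le> \<phi>\<^sub>0 x - t \<and> \<phi>\<^sub>0 x - t \<le> 3/2" for x using t(1)[rule_format, of x] unfolding abs_le_iff by linarith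
    then show "bounded_borel (\<lambda>x. \<phi>\<^sub>0 x - t) (-3/2) (3/2)" unfolding bounded_borel_def by simp
    have "-3/2 \<le> \<zeta> y + t \<and> \<zeta> y + t \<le> 3/2" for y using t(2)[rule_format, of y] unfolding abs_le_iff by linarith
    then show "bounded_borel (\<lambda>y. \<zeta> y + t) (-3/2) (3/2)" unfolding bounded_borel_def by simp
    show "\<phi>\<^sub>0 x - t = ctransX c \<epsilon> \<nu> (\<lambda>y. \<zeta> y + t) x" for x
      by (simp add: ctransX_add_const[OF \<nu> \<zeta>] \<phi>\<^sub>0_def)
    show "\<zeta> y + t = ctransY c \<epsilon> \<mu> (\<lambda>x. \<phi>\<^sub>0 x - t) y" for y
    proof -
      have "ctransY c \<epsilon> \<mu> (\<lambda>x. \<phi>\<^sub>0 x - t) y = ctransX (\<lambda>y x. c x y) \<epsilon> \<mu> (\<lambda>x. \<phi>\<^sub>0 x + - t) y"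
        by (simp add: ctransY_eq_ctransX_swap)
      also have "\<dots> = ctransX (\<lambda>y x. c x y) \<epsilon> \<mu> \<phi>\<^sub>0 y + t"
        using swapped.ctransX_add_const[OF \<mu> \<phi>\<^sub>0, of "- t" y] by simp
      also have "ctransX (\<lambda>y x. c x y) \<epsilon> \<mu> \<phi>\<^sub>0 y = \<zeta> y"
        using fixpoint[of y] unfolding sinkhorn_map_def ctransY_eq_ctransX_swap \<phi>\<^sub>0_def .
      finally show ?thesis by simp
    qed
  qed
qed

end

lemma ctransX_in_Fce:
  assumes \<xi>: "borel_prob \<xi>" and \<psi>: "bounded_borel \<psi> (-3/2) (3/2)" and \<phi>: "bounded_borel \<phi> (-3/2) (3/2)"
    and eq: "\<And>x. \<phi> x = ctransX c \<epsilon> \<xi> \<psi> x"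
  shows "\<phi> \<in> Fce c \<epsilon>"
proof -
  have "\<bar>\<phi> x\<bar> \<le> 3/2" "\<bar>\<psi> y\<bar> \<le> 3/2" for x y
    using bounded_borelD(2,3)[OF \<phi>, of x] bounded_borelD(2,3)[OF \<psi>, of y] unfolding abs_le_iff by linarith+
  then show ?thesis
    unfolding Fce_def using \<xi> bounded_borelD(1)[OF \<psi>] eq by (intro CollectI exI[of _ \<xi>] exI[of _ \<psi>]) auto
qed

lemma OT_potentials:
  assumes \<mu>: "borel_prob \<mu>" and \<nu>: "borel_prob \<nu>"
  obtains \<phi> \<psi> where "bounded_borel \<phi> (-3/2) (3/2)" "bounded_borel \<psi> (-3/2) (3/2)"
    "\<And>x. \<phi> x = ctransX c \<epsilon> \<nu> \<psi> x" "\<And>y. \<psi> y = ctransY c \<epsilon> \<mu> \<phi> y"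
    "OT c \<epsilon> \<mu> \<nu> = ereal ((\<integral>x. \<phi> x \<partial>\<mu>) + (\<integral>y. \<psi> y \<partial>\<nu>))"
proof -
  obtain \<phi> \<psi> where potentials: "bounded_borel \<phi> (-3/2) (3/2)" "bounded_borel \<psi> (-3/2) (3/2)"
    "\<And>x. \<phi> x = ctransX c \<epsilon> \<nu> \<psi> x" "\<And>y. \<psi> y = ctransY c \<epsilon> \<mu> \<phi> y"
    using sinkhorn_potentials_exist[OF \<mu> \<nu>] by blast
  show thesis by (rule that[OF potentials OT_eq_dual[OF \<mu> \<nu> potentials]])
qed

lemma ctransX_dual_le_OT:
  assumes \<mu>: "borel_prob \<mu>" and \<nu>: "borel_prob \<nu>"
    and \<phi>: "bounded_borel \<phi> lo1 hi1" and \<psi>: "bounded_borel \<psi> lo2 hi2"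
    and eq: "\<And>x. \<phi> x = ctransX c \<epsilon> \<nu> \<psi> x"
  shows "ereal ((\<integral>x. \<phi> x \<partial>\<mu>) + (\<integral>y. \<psi> y \<partial>\<nu>)) \<le> OT c \<epsilon> \<mu> \<nu>"
  using integral_exp_gibbs_exponent_eq_1_fst[OF assms] by (intro dual_le_OT[OF \<mu> \<nu> \<phi> \<psi>]) simp

lemma ctransY_dual_le_OT:
  assumes \<mu>: "borel_prob \<mu>" and \<nu>: "borel_prob \<nu>"
    and \<phi>: "bounded_borel \<phi> lo1 hi1" and \<psi>: "bounded_borel \<psi> lo2 hi2"
    and eq: "\<And>y. \<psi> y = ctransY c \<epsilon> \<mu> \<phi> y"
  shows "ereal ((\<integral>x. \<phi> x \<partial>\<mu>) + (\<integral>y. \<psi> y \<partial>\<nu>)) \<le> OT c \<epsilon> \<mu> \<nu>"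
  using integral_exp_gibbs_exponent_eq_1_snd[OF assms] by (intro dual_le_OT[OF \<mu> \<nu> \<phi> \<psi>]) simp

lemma OT_diff_fst_le:
  assumes \<mu>: "borel_prob \<mu>" and \<mu>': "borel_prob \<mu>'" and \<nu>: "borel_prob \<nu>"
    and a: "OT c \<epsilon> \<mu>' \<nu> = ereal a" and b: "OT c \<epsilon> \<mu> \<nu> = ereal b"
  shows "ereal \<bar>a - b\<bar> \<le> (SUP \<phi>\<in>Fce c \<epsilon>. ereal \<bar>(\<integral>x. \<phi> x \<partial>\<mu>') - (\<integral>x. \<phi> x \<partial>\<mu>)\<bar>)"
proof -
  obtain \<phi>1 \<psi>1 where \<phi>1: "bounded_borel \<phi>1 (-3/2) (3/2)" and \<psi>1: "bounded_borel \<psi>1 (-3/2) (3/2)"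
    and eq1: "\<And>x. \<phi>1 x = ctransX c \<epsilon> \<nu> \<psi>1 x" and "\<And>y. \<psi>1 y = ctransY c \<epsilon> \<mu>' \<phi>1 y"
    and OT1: "OT c \<epsilon> \<mu>' \<nu> = ereal ((\<integral>x. \<phi>1 x \<partial>\<mu>') + (\<integral>y. \<psi>1 y \<partial>\<nu>))"
    using OT_potentials[OF \<mu>' \<nu>] by blast
  obtain \<phi>2 \<psi>2 where \<phi>2: "bounded_borel \<phi>2 (-3/2) (3/2)" and \<psi>2: "bounded_borel \<psi>2 (-3/2) (3/2)"
    and eq2: "\<And>x. \<phi>2 x = ctransX c \<epsilon> \<nu> \<psi>2 x" and "\<And>y. \<psi>2 y = ctransY c \<epsilon> \<mu> \<phi>2 y"
    and OT2: "OT c \<epsilon> \<mu> \<nu> = ereal ((\<integral>x. \<phi>2 x \<partial>\<mu>) + (\<integral>y. \<psi>2 y \<partial>\<nu>))"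
    using OT_potentials[OF \<mu> \<nu>] by blast
  show ?thesis
  proof (rule ereal_abs_diff_le)
    show "a - b \<le> (\<integral>x. \<phi>1 x \<partial>\<mu>') - (\<integral>x. \<phi>1 x \<partial>\<mu>)"
      using ctransX_dual_le_OT[OF \<mu> \<nu> \<phi>1 \<psi>1 eq1] OT1 a b by simp
    show "b - a \<le> (\<integral>x. \<phi>2 x \<partial>\<mu>) - (\<integral>x. \<phi>2 x \<partial>\<mu>')"
      using ctransX_dual_le_OT[OF \<mu>' \<nu> \<phi>2 \<psi>2 eq2] OT2 a b by simp
    show "ereal \<bar>(\<integral>x. \<phi>1 x \<partial>\<mu>') - (\<integral>x. \<phi>1 x \<partial>\<mu>)\<bar> \<le> (SUP \<phi>\<in>Fce c \<epsilon>. ereal \<bar>(\<integral>x. \<phi> x \<partial>\<mu>') - (\<integral>x. \<phi> x \<partial>\<mu>)\<bar>)"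
      by (rule SUP_upper[OF ctransX_in_Fce[OF \<nu> \<psi>1 \<phi>1 eq1]])
    show "ereal \<bar>(\<integral>x. \<phi>2 x \<partial>\<mu>) - (\<integral>x. \<phi>2 x \<partial>\<mu>')\<bar> \<le> (SUP \<phi>\<in>Fce c \<epsilon>. ereal \<bar>(\<integral>x. \<phi> x \<partial>\<mu>') - (\<integral>x. \<phi> x \<partial>\<mu>)\<bar>)"
      using SUP_upper[OF ctransX_in_Fce[OF \<nu> \<psi>2 \<phi>2 eq2]] by (simp add: abs_minus_commute)
  qed
qed

lemma OT_diff_snd_le:
  assumes \<mu>': "borel_prob \<mu>'" and \<nu>: "borel_prob \<nu>" and \<nu>': "borel_prob \<nu>'"
    and a: "OT c \<epsilon> \<mu>' \<nu>' = ereal a" and b: "OT c \<epsilon> \<mu>' \<nu> = ereal b"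
  shows "ereal \<bar>a - b\<bar>
    \<le> (SUP \<phi>\<in>Fce c \<epsilon>. ereal \<bar>(\<integral>y. ctransY c \<epsilon> \<mu>' \<phi> y \<partial>\<nu>') - (\<integral>y. ctransY c \<epsilon> \<mu>' \<phi> y \<partial>\<nu>)\<bar>)"
proof -
  obtain \<phi>1 \<psi>1 where \<phi>1: "bounded_borel \<phi>1 (-3/2) (3/2)" and \<psi>1: "bounded_borel \<psi>1 (-3/2) (3/2)"
    and eq1: "\<And>x. \<phi>1 x = ctransX c \<epsilon> \<nu>' \<psi>1 x" and eq1': "\<And>y. \<psi>1 y = ctransY c \<epsilon> \<mu>' \<phi>1 y"
    and OT1: "OT c \<epsilon> \<mu>' \<nu>' = ereal ((\<integral>x. \<phi>1 x \<partial>\<mu>') + (\<integral>y. \<psi>1 y \<partial>\<nu>'))"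
    using OT_potentials[OF \<mu>' \<nu>'] by blast
  obtain \<phi>2 \<psi>2 where \<phi>2: "bounded_borel \<phi>2 (-3/2) (3/2)" and \<psi>2: "bounded_borel \<psi>2 (-3/2) (3/2)"
    and eq2: "\<And>x. \<phi>2 x = ctransX c \<epsilon> \<nu> \<psi>2 x" and eq2': "\<And>y. \<psi>2 y = ctransY c \<epsilon> \<mu>' \<phi>2 y"
    and OT2: "OT c \<epsilon> \<mu>' \<nu> = ereal ((\<integral>x. \<phi>2 x \<partial>\<mu>') + (\<integral>y. \<psi>2 y \<partial>\<nu>))"
    using OT_potentials[OF \<mu>' \<nu>] by blast
  have \<psi>1_eq: "ctransY c \<epsilon> \<mu>' \<phi>1 = \<psi>1" and \<psi>2_eq: "ctransY c \<epsilon> \<mu>' \<phi>2 = \<psi>2"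
    using eq1' eq2' by auto
  show ?thesis
  proof (rule ereal_abs_diff_le)
    show "a - b \<le> (\<integral>y. \<psi>1 y \<partial>\<nu>') - (\<integral>y. \<psi>1 y \<partial>\<nu>)"
      using ctransY_dual_le_OT[OF \<mu>' \<nu> \<phi>1 \<psi>1 eq1'] OT1 a b by simp
    show "b - a \<le> (\<integral>y. \<psi>2 y \<partial>\<nu>) - (\<integral>y. \<psi>2 y \<partial>\<nu>')"
      using ctransY_dual_le_OT[OF \<mu>' \<nu>' \<phi>2 \<psi>2 eq2'] OT2 a b by simp
    show "ereal \<bar>(\<integral>y. \<psi>1 y \<partial>\<nu>') - (\<integral>y. \<psi>1 y \<partial>\<nu>)\<bar>
        \<le> (SUP \<phi>\<in>Fce c \<epsilon>. ereal \<bar>(\<integral>y. ctransY c \<epsilon> \<mu>' \<phi> y \<partial>\<nu>') - (\<integral>y. ctransY c \<epsilon> \<mu>' \<phi> y \<partial>\<nu>)\<bar>)"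
      unfolding \<psi>1_eq[symmetric] by (rule SUP_upper[OF ctransX_in_Fce[OF \<nu>' \<psi>1 \<phi>1 eq1]])
    show "ereal \<bar>(\<integral>y. \<psi>2 y \<partial>\<nu>) - (\<integral>y. \<psi>2 y \<partial>\<nu>')\<bar>
        \<le> (SUP \<phi>\<in>Fce c \<epsilon>. ereal \<bar>(\<integral>y. ctransY c \<epsilon> \<mu>' \<phi> y \<partial>\<nu>') - (\<integral>y. ctransY c \<epsilon> \<mu>' \<phi> y \<partial>\<nu>)\<bar>)"
      unfolding \<psi>2_eq[symmetric] abs_minus_commute[of "integral\<^sup>L \<nu> _"]
      by (rule SUP_upper[OF ctransX_in_Fce[OF \<nu> \<psi>2 \<phi>2 eq2]])
  qed
qed

end

theorem mainTheorem2:
  fixes c :: "'a::polish_space \<Rightarrow> 'b::polish_space \<Rightarrow> real"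
    and \<epsilon> :: real
    and \<mu> \<mu>' :: "'a measure" and \<nu> \<nu>' :: "'b measure"
  assumes c_meas: "(\<lambda>z. c (fst z) (snd z)) \<in> borel_measurable (borel \<Otimes>\<^sub>M borel)"
    and c_bdd: "\<And>x y. \<bar>c x y\<bar> \<le> 1"
    and eps: "\<epsilon> > 0"
    and mu: "borel_prob \<mu>" and mu': "borel_prob \<mu>'"
    and nu: "borel_prob \<nu>" and nu': "borel_prob \<nu>'"
  shows "\<bar>OT c \<epsilon> \<mu>' \<nu>' - OT c \<epsilon> \<mu> \<nu>\<bar>
    \<le> 2 * (SUP \<phi>\<in>Fce c \<epsilon>. ereal \<bar>(\<integral>x. \<phi> x \<partial>\<mu>') - (\<integral>x. \<phi> x \<partial>\<mu>)\<bar>)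
     + 2 * (SUP \<phi>\<in>Fce c \<epsilon>. ereal \<bar>(\<integral>y. ctransY c \<epsilon> \<mu>' \<phi> y \<partial>\<nu>') - (\<integral>y. ctransY c \<epsilon> \<mu>' \<phi> y \<partial>\<nu>)\<bar>)"
    (is "_ \<le> 2 * ?S\<^sub>\<mu> + 2 * ?S\<^sub>\<nu>")
proof -
  interpret bounded_cost c \<epsilon> using c_meas c_bdd eps by unfold_locales
  obtain a b d where a: "OT c \<epsilon> \<mu>' \<nu>' = ereal a" and b: "OT c \<epsilon> \<mu>' \<nu> = ereal b"
    and d: "OT c \<epsilon> \<mu> \<nu> = ereal d"
    by (metis OT_potentials mu mu' nu nu')
  have \<mu>_step: "ereal \<bar>b - d\<bar> \<le> ?S\<^sub>\<mu>" by (rule OT_diff_fst_le[OF mu mu' nu b d])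
  have \<nu>_step: "ereal \<bar>a - b\<bar> \<le> ?S\<^sub>\<nu>" by (rule OT_diff_snd_le[OF mu' nu nu' a b])
  have "\<bar>OT c \<epsilon> \<mu>' \<nu>' - OT c \<epsilon> \<mu> \<nu>\<bar> \<le> ereal \<bar>a - b\<bar> + ereal \<bar>b - d\<bar>" by (simp add: a d)
  also have "\<dots> \<le> ?S\<^sub>\<nu> + ?S\<^sub>\<mu>" by (rule add_mono[OF \<nu>_step \<mu>_step])
  also have "\<dots> \<le> 2 * ?S\<^sub>\<mu> + 2 * ?S\<^sub>\<nu>"
  proof -
    have "0 \<le> ?S\<^sub>\<mu>" "0 \<le> ?S\<^sub>\<nu>" using \<mu>_step \<nu>_step by (auto intro: order_trans[rotated])
    then show ?thesis by (cases ?S\<^sub>\<mu>; cases ?S\<^sub>\<nu>) auto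
  qed
  finally show ?thesis .
qed

end
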